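(* The number of polygonizations that a double chain $D$ with $n$ points on its upper chain $U$ and $m$ points on its lower chain $L$ admits is at most $O(5.610718614^{n+m})$.
   Context: A polygonization of a finite point set in the plane is a non-crossing Hamiltonian cycle on it (a simple polygon with straight-line edges whose vertex set is exactly the point set). A double chain with $n$ upper and $m$ lower points is a planar point set such that $n$ of the points lie on an upper convex chain $U$ and the other $m$ lie on a lower convex chain $L$, the two chains having opposite concavity; for every pair of points of $U$, the line through them leaves all points of $L$ below it; and for every pair of points of $L$, the line through them leaves all points of $U$ above it. *)

theory Defs
  imports "HOL-Analysis.Analysis"
begin

type_synonym pt = "real \<times> real"

text \<open>Signed area (cross product) of the triangle p, q, r; positive iff r lies to the
  left of the directed line from p to q.\<close>
definition cross :: "pt \<Rightarrow> pt \<Rightarrow> pt \<Rightarrow> real" where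
  "cross p q r = (fst q - fst p) * (snd r - snd p) - (snd q - snd p) * (fst r - fst p)"

definition strictly_above :: "pt \<Rightarrow> pt \<Rightarrow> pt \<Rightarrow> bool" where
  "strictly_above p q r = (if fst p < fst q then cross p q r > 0 else cross q p r > 0)"

definition strictly_below :: "pt \<Rightarrow> pt \<Rightarrow> pt \<Rightarrow> bool" where
  "strictly_below p q r = (if fst p < fst q then cross p q r < 0 else cross q p r < 0)"

definition convex_chain :: "pt set \<Rightarrow> bool" where
  "convex_chain S \<longleftrightarrow> finite S \<and> inj_on fst S \<and>
     (\<forall>p\<in>S. \<forall>q\<in>S. \<forall>r\<in>S. fst p < fst q \<and> fst q < fst r \<longrightarrow> strictly_below p r q)"

definition concave_chain :: "pt set \<Rightarrow> bool" where
  "concave_chain S \<longleftrightarrow> finite S \<and> inj_on fst S \<and>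
     (\<forall>p\<in>S. \<forall>q\<in>S. \<forall>r\<in>S. fst p < fst q \<and> fst q < fst r \<longrightarrow> strictly_above p r q)"

definition double_chain :: "pt set \<Rightarrow> pt set \<Rightarrow> bool" where
  "double_chain U L \<longleftrightarrow> U \<inter> L = {} \<and>
     ((convex_chain U \<and> concave_chain L) \<or> (concave_chain U \<and> convex_chain L)) \<and>
     (\<forall>p\<in>U. \<forall>q\<in>U. p \<noteq> q \<longrightarrow> (\<forall>l\<in>L. strictly_below p q l)) \<and>
     (\<forall>p\<in>L. \<forall>q\<in>L. p \<noteq> q \<longrightarrow> (\<forall>u\<in>U. strictly_above p q u))"

definition cycle_edges :: "pt list \<Rightarrow> pt set set" where
  "cycle_edges vs = {{vs ! i, vs ! ((i + 1) mod length vs)} | i. i < length vs}"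

text \<open>A polygonization of P, represented by its edge set: a Hamiltonian cycle on P whose
  straight-line edges pairwise meet only in common endpoints.\<close>
definition polygonization :: "pt set \<Rightarrow> pt set set \<Rightarrow> bool" where
  "polygonization P E \<longleftrightarrow>
     (\<exists>vs. distinct vs \<and> set vs = P \<and> length vs \<ge> 3 \<and> E = cycle_edges vs) \<and>
     (\<forall>e\<in>E. \<forall>f\<in>E. e \<noteq> f \<longrightarrow>
        (\<Union>a\<in>e. \<Union>b\<in>e. closed_segment a b) \<inter> (\<Union>a\<in>f. \<Union>b\<in>f. closed_segment a b) \<subseteq> e \<inter> f)"

end

(*
  Restricted to the upper chain U, the edges of a polygonization of a double chain form a
  noncrossing linear forest on points in convex position, and likewise on the lower chain L.
  The remaining edges, the bridges between the chains, do not cross each other, so they are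
  determined by the degrees they have to supply; hence a polygonization is determined by its
  two forests and their number is at most f(card U) * f(card L), where f n counts the
  noncrossing path covers of n points in convex position. (If one chain is empty, deleting an
  edge of the polygon on the other chain already leaves such a forest.)

  The path through the first point splits a path cover into a noncrossing Hamiltonian path on
  some subset S, of which there are at most k * 2^(k-3) for card S = k, and independent path
  covers of the gaps between consecutive elements of S. For the generating function F of f
  this gives F z \<le> 1 + P (z * F z) with P x = x + x^2 + \<Sum>k\<ge>3. k * 2^(k-3) * x^k, and at
  z = 1 / 5.610718614 the value Y = 1.593329 satisfies 1 + P (z * Y) \<le> Y, so that
  f n \<le> Y * 5.610718614 ^ n.
*)

theory Submission
  imports Defs "HOL-Library.FuncSet"
begin

definition path_edges :: "'a list \<Rightarrow> 'a set set" where
  "path_edges xs = (\<lambda>(a, b). {a, b}) ` set (zip xs (tl xs))"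

lemma path_edges_Nil [simp]: "path_edges [] = {}"
  and path_edges_single [simp]: "path_edges [x] = {}"
  and path_edges_Cons_Cons [simp]: "path_edges (x # y # xs) = insert {x, y} (path_edges (y # xs))"
  by (simp_all add: path_edges_def)

lemma path_edges_conv_nth: "path_edges xs = {{xs ! i, xs ! Suc i} | i. Suc i < length xs}"
  by (force simp: path_edges_def set_zip nth_tl)

lemma path_edges_nth: "Suc i < length xs \<Longrightarrow> {xs ! i, xs ! Suc i} \<in> path_edges xs"
  by (auto simp: path_edges_conv_nth)

lemma path_edges_Cons: "xs \<noteq> [] \<Longrightarrow> path_edges (x # xs) = insert {x, hd xs} (path_edges xs)"
  by (cases xs) auto

lemma path_edges_Cons_subset: "path_edges xs \<subseteq> path_edges (x # xs)"
  by (cases xs) auto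

lemma path_edges_map: "path_edges (map f xs) = (`) f ` path_edges xs"
  by (induction xs rule: induct_list012) auto

lemma path_edges_append_single:
  "xs \<noteq> [] \<Longrightarrow> path_edges (xs @ [y]) = insert {last xs, y} (path_edges xs)"
  by (induction xs rule: induct_list012) (auto simp: insert_commute)

lemma path_edges_rev [simp]: "path_edges (rev xs) = path_edges xs"
proof (induction xs rule: induct_list012)
  case (3 x y zs)
  have "path_edges (rev (x # y # zs)) = path_edges (rev (y # zs) @ [x])"
    by simp
  also have "\<dots> = insert {y, x} (path_edges (rev (y # zs)))"
    by (subst path_edges_append_single) auto
  finally show ?case
    using 3 by (simp add: insert_commute)
qed auto

lemma path_edges_subset: "e \<in> path_edges xs \<Longrightarrow> e \<subseteq> set xs"
  by (auto simp: path_edges_conv_nth)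

lemma finite_path_edges [simp]: "finite (path_edges xs)"
  by (simp add: path_edges_def)

lemma path_edges_distinct:
  assumes "distinct xs" "e \<in> path_edges xs"
  obtains a b where "a \<noteq> b" "e = {a, b}"
proof -
  obtain i where "e = {xs ! i, xs ! Suc i}" "Suc i < length xs"
    using assms(2) by (auto simp: path_edges_conv_nth)
  moreover have "xs ! i \<noteq> xs ! Suc i"
    using assms(1) calculation(2) by (simp add: nth_eq_iff_index_eq)
  ultimately show ?thesis
    using that by blast
qed

lemma path_edges_change:
  assumes "x \<in> set xs" "y \<in> set xs" "P x" "\<not> P y"
  shows "\<exists>v w. {v, w} \<in> path_edges xs \<and> P v \<and> \<not> P w"
  using assms
proof (induction xs arbitrary: x y)
  case Nil
  then show ?case by simp
next
  case (Cons a xs)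
  show ?case
  proof (cases xs)
    case Nil
    with Cons.prems show ?thesis by simp
  next
    case (Cons b ys)
    show ?thesis
    proof (cases "P a = P b")
      case False
      have "{a, b} \<in> path_edges (a # xs)" "{b, a} \<in> path_edges (a # xs)"
        using \<open>xs = b # ys\<close> by (simp_all add: insert_commute)
      with False show ?thesis
        by (cases "P a") auto
    next
      case True
      define x' where "x' = (if x = a then b else x)"
      define y' where "y' = (if y = a then b else y)"
      have "x' \<in> set xs" "y' \<in> set xs" "P x'" "\<not> P y'"
        using Cons.prems True \<open>xs = b # ys\<close> by (auto simp: x'_def y'_def)
      then obtain v w where "{v, w} \<in> path_edges xs" "P v" "\<not> P w"
        using Cons.IH by blast
      then show ?thesis
        using path_edges_Cons_subset[of xs a] by blast
    qed
  qed
qed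

text \<open>Edges between indices of points in convex position cross exactly when their endpoints
  interleave.\<close>
definition noncrossing :: "nat set set \<Rightarrow> bool" where
  "noncrossing F \<longleftrightarrow> \<not> (\<exists>a b c d. a < c \<and> c < b \<and> b < d \<and> {a, b} \<in> F \<and> {c, d} \<in> F)"

lemma noncrossing_subset: "noncrossing F \<Longrightarrow> G \<subseteq> F \<Longrightarrow> noncrossing G"
  unfolding noncrossing_def by blast

lemma noncrossingD:
  assumes "noncrossing F" "{a, b} \<in> F" "{x, y} \<in> F" "a < x" "x < b" "y < a \<or> b < y"
  shows False
  using assms unfolding noncrossing_def by (metis insert_commute)

lemma noncrossing_path_side:
  assumes "noncrossing F" "{a, b} \<in> F" "path_edges xs \<subseteq> F" "a \<notin> set xs" "b \<notin> set xs"
    "x \<in> set xs" "a < x" "x < b" "y \<in> set xs"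
  shows "a < y \<and> y < b"
proof (rule ccontr)
  assume "\<not> (a < y \<and> y < b)"
  then obtain v w where vw: "{v, w} \<in> path_edges xs" "a < v \<and> v < b" "\<not> (a < w \<and> w < b)"
    using path_edges_change[of x xs y "\<lambda>t. a < t \<and> t < b"] assms(6-9) by auto
  have "w \<noteq> a" "w \<noteq> b"
    using vw(1) path_edges_subset assms(4,5) by blast+
  then show False
    using noncrossingD[OF assms(1,2), of v w] vw assms(3) by auto
qed

lemma path_edges_short:
  assumes "distinct xs" "length xs \<le> 2"
  shows "path_edges xs = (if length xs = 2 then {set xs} else {})"
  using assms by (induction xs rule: induct_list012) auto

definition noncrossing_paths :: "nat set \<Rightarrow> nat list set" where
  "noncrossing_paths S = {R. distinct R \<and> set R = S \<and> noncrossing (path_edges R)}"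

lemma finite_noncrossing_paths: "finite S \<Longrightarrow> finite (noncrossing_paths S)"
  by (rule finite_subset[OF _ finite_subset_distinct[of S]]) (auto simp: noncrossing_paths_def)

lemma noncrossing_paths_length: "R \<in> noncrossing_paths S \<Longrightarrow> length R = card S"
  by (auto simp: noncrossing_paths_def distinct_card)

lemma noncrossing_paths_tl: "x # R \<in> noncrossing_paths S \<Longrightarrow> R \<in> noncrossing_paths (S - {x})"
  by (auto simp: noncrossing_paths_def intro: noncrossing_subset[OF _ path_edges_Cons_subset])

lemma noncrossing_paths_rev: "R \<in> noncrossing_paths S \<Longrightarrow> rev R \<in> noncrossing_paths S"
  by (simp add: noncrossing_paths_def)

text \<open>If the elements of S are placed on a circle in increasing order, the next candidates of x
  are its (at most two) neighbours on that circle.\<close>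
definition next_candidates :: "nat set \<Rightarrow> nat \<Rightarrow> nat set" where
  "next_candidates S x = {y \<in> S. y \<noteq> x \<and>
     ((\<forall>t\<in>S. \<not> (min x y < t \<and> t < max x y)) \<or> (\<forall>t\<in>S. min x y \<le> t \<and> t \<le> max x y))}"

lemma not_next_candidate:
  assumes "t \<in> S" "min x y < t" "t < max x y" "t' \<in> S" "t' < min x y \<or> max x y < t'"
  shows "y \<notin> next_candidates S x"
  using assms unfolding next_candidates_def by force

lemma card_next_candidates: "card (next_candidates S x) \<le> 2"
proof (rule ccontr)
  let ?C = "next_candidates S x"
  assume "\<not> card ?C \<le> 2"
  then have fin: "finite ?C" and three: "2 < card ?C"
    using card.infinite by fastforce+
  define y1 where "y1 = Min ?C"
  define y3 where "y3 = Max ?C"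
  have "card ?C - card {y1, y3} \<le> card (?C - {y1, y3})"
    by (rule diff_card_le_card_Diff) simp
  moreover have "card {y1, y3} \<le> 2"
    by (simp add: card_insert_if)
  ultimately have "0 < card (?C - {y1, y3})"
    using three by linarith
  then obtain y2 where y2: "y2 \<in> ?C" "y2 \<noteq> y1" "y2 \<noteq> y3"
    by (auto simp: card_gt_0_iff)
  have ne: "?C \<noteq> {}"
    using y2(1) by blast
  have C: "y1 \<in> ?C" "y3 \<in> ?C" "y1 < y2" "y2 < y3"
    using Min_in[OF fin ne] Max_in[OF fin ne] Min_le[OF fin y2(1)] Max_ge[OF fin y2(1)] y2
    unfolding y1_def y3_def by auto
  then have S: "y1 \<in> S" "y2 \<in> S" "y3 \<in> S" "x \<notin> {y1, y2, y3}"
    using y2(1) by (auto simp: next_candidates_def)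
  consider "x < y1" | "y1 < x" "x < y2" | "y2 < x" "x < y3" | "y3 < x"
    using S(4) C(3,4) by (metis insertCI linorder_neqE_nat)
  then show False
  proof cases
    case 1
    then show False using not_next_candidate[of y1 S x y2 y3] S y2(1) C by simp
  next
    case 2
    then show False using not_next_candidate[of y2 S x y3 y1] S C by simp
  next
    case 3
    then show False using not_next_candidate[of y2 S x y1 y3] S C by simp
  next
    case 4
    then show False using not_next_candidate[of y3 S x y2 y1] S y2(1) C by simp
  qed
qed

lemma noncrossing_path_second:
  assumes "x # y # R \<in> noncrossing_paths S"
  shows "y \<in> next_candidates S x"
proof -
  let ?lo = "min x y" and ?hi = "max x y"
  have d: "distinct (x # y # R)" and S: "S = insert x (insert y (set R))"
    and nc: "noncrossing (path_edges (x # y # R))"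
    using assms by (auto simp: noncrossing_paths_def)
  have chord: "{?lo, ?hi} \<in> path_edges (x # y # R)"
    by (simp add: min_def max_def insert_commute)
  have R: "path_edges R \<subseteq> path_edges (x # y # R)" "?lo \<notin> set R" "?hi \<notin> set R"
    using d path_edges_Cons_subset[of R y] path_edges_Cons_subset[of "y # R" x]
    by (auto simp: min_def max_def)
  have "\<forall>t\<in>S. ?lo \<le> t \<and> t \<le> ?hi" if "t1 \<in> S" "?lo < t1" "t1 < ?hi" for t1
  proof -
    have "t1 \<in> set R"
      using that S by (auto simp: min_def max_def split: if_splits)
    then show ?thesis
      using noncrossing_path_side[OF nc chord R, of t1] that S by force
  qed
  then show ?thesis
    using d S by (auto simp: next_candidates_def)
qed

lemma card_noncrossing_paths_from:
  "finite S \<Longrightarrow> card S = Suc (Suc k) \<Longrightarrow> x \<in> S \<Longrightarrow>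
     card {R \<in> noncrossing_paths S. hd R = x} \<le> 2 ^ k"
proof (induction k arbitrary: S x)
  case 0
  then have "card (S - {x}) = 1"
    by simp
  then obtain y where "S - {x} = {y}"
    by (rule card_1_singletonE)
  then have S: "S = {x, y}" "x \<noteq> y"
    using "0.prems"(3) by auto
  have "{R \<in> noncrossing_paths S. hd R = x} \<subseteq> {[x, y]}"
  proof
    fix R assume R: "R \<in> {R \<in> noncrossing_paths S. hd R = x}"
    then have "length R = 2" "set R = S" "hd R = x" "distinct R"
      using noncrossing_paths_length "0.prems"(2) by (auto simp: noncrossing_paths_def)
    then obtain a b where "R = [a, b]"
      by (auto simp: length_Suc_conv numeral_2_eq_2)
    with S \<open>set R = S\<close> \<open>hd R = x\<close> show "R \<in> {[x, y]}"
      by (auto simp: doubleton_eq_iff)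
  qed
  then show ?case
    using card_mono[of "{[x, y]}"] by fastforce
next
  case (Suc k)
  let ?S' = "S - {x}"
  let ?from = "\<lambda>S x. {R \<in> noncrossing_paths S. hd R = x}"
  have "?from S x \<subseteq> (\<Union>y\<in>next_candidates S x. (#) x ` ?from ?S' y)"
  proof
    fix R assume R: "R \<in> ?from S x"
    then have "length R = Suc (Suc (Suc k))"
      using noncrossing_paths_length Suc.prems(2) by auto
    then obtain y R' where "R = x # y # R'"
      using R by (auto simp: length_Suc_conv)
    with R show "R \<in> (\<Union>y\<in>next_candidates S x. (#) x ` ?from ?S' y)"
      using noncrossing_path_second noncrossing_paths_tl by fastforce
  qed
  then have "card (?from S x) \<le> card (\<Union>y\<in>next_candidates S x. (#) x ` ?from ?S' y)"
    using Suc.prems(1) finite_noncrossing_paths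
    by (intro card_mono) (auto simp: next_candidates_def)
  also have "\<dots> \<le> (\<Sum>y\<in>next_candidates S x. card ((#) x ` ?from ?S' y))"
    by (rule card_UN_le) (use Suc.prems(1) in \<open>simp add: next_candidates_def\<close>)
  also have "\<dots> \<le> (\<Sum>y\<in>next_candidates S x. 2 ^ k)"
  proof (rule sum_mono)
    fix y assume "y \<in> next_candidates S x"
    then have "card (?from ?S' y) \<le> 2 ^ k"
      using Suc.IH[of ?S' y] Suc.prems by (auto simp: next_candidates_def)
    then show "card ((#) x ` ?from ?S' y) \<le> 2 ^ k"
      using card_image_le[of "?from ?S' y" "(#) x"] Suc.prems(1) finite_noncrossing_paths
      by fastforce
  qed
  also have "\<dots> \<le> 2 * 2 ^ k"
    using card_next_candidates[of S x] by simp
  finally show ?case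
    by simp
qed

lemma card_noncrossing_paths:
  assumes "finite S" "card S = Suc (Suc k)"
  shows "card (noncrossing_paths S) \<le> card S * 2 ^ k"
proof -
  have "noncrossing_paths S \<subseteq> (\<Union>x\<in>S. {R \<in> noncrossing_paths S. hd R = x})"
  proof
    fix R assume R: "R \<in> noncrossing_paths S"
    then have "R \<noteq> []"
      using noncrossing_paths_length[OF R] assms(2) by auto
    with R show "R \<in> (\<Union>x\<in>S. {R \<in> noncrossing_paths S. hd R = x})"
      by (auto simp: noncrossing_paths_def)
  qed
  then have "card (noncrossing_paths S)
      \<le> card (\<Union>x\<in>S. {R \<in> noncrossing_paths S. hd R = x})"
    using assms(1) finite_noncrossing_paths by (intro card_mono) auto
  also have "\<dots> \<le> (\<Sum>x\<in>S. card {R \<in> noncrossing_paths S. hd R = x})"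
    by (rule card_UN_le[OF assms(1)])
  also have "\<dots> \<le> (\<Sum>x\<in>S. 2 ^ k)"
    using card_noncrossing_paths_from assms by (intro sum_mono) auto
  finally show ?thesis
    by simp
qed

lemma noncrossing_paths_hd_neq_last:
  assumes "R \<in> noncrossing_paths S" "2 \<le> card S"
  shows "R \<noteq> [] \<and> hd R \<noteq> last R"
proof -
  have "length R \<ge> 2" "distinct R"
    using assms noncrossing_paths_length by (auto simp: noncrossing_paths_def)
  then obtain a b R' where "R = a # b # R'" "distinct (a # b # R')"
    by (auto simp: numeral_2_eq_2 le_Suc_eq length_Suc_conv Suc_le_length_iff)
  then show ?thesis
    using last_in_set[of "b # R'"] by auto
qed

lemma card_noncrossing_paths_hd_less_last:
  assumes "finite S" "2 \<le> card S"
  shows "2 * card {R \<in> noncrossing_paths S. hd R < last R} = card (noncrossing_paths S)"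
proof -
  let ?A = "{R \<in> noncrossing_paths S. hd R < last R}"
  let ?B = "{R \<in> noncrossing_paths S. last R < hd R}"
  have fin: "finite (noncrossing_paths S)"
    using assms(1) by (rule finite_noncrossing_paths)
  have "rev ` ?A = ?B"
  proof (rule set_eqI)
    fix R
    show "R \<in> rev ` ?A \<longleftrightarrow> R \<in> ?B"
      using noncrossing_paths_rev noncrossing_paths_hd_neq_last[OF _ assms(2)]
      by (force simp: hd_rev last_rev image_iff intro: exI[of _ "rev R"])
  qed
  moreover have "card (rev ` ?A) = card ?A"
    by (rule card_image) (simp add: inj_on_def)
  ultimately have "card ?B = card ?A"
    by simp
  moreover have "noncrossing_paths S = ?A \<union> ?B"
    using noncrossing_paths_hd_neq_last[OF _ assms(2)] by (auto simp: neq_iff)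
  moreover have "card (?A \<union> ?B) = card ?A + card ?B"
    using fin by (intro card_Un_disjoint) auto
  ultimately show ?thesis
    by simp
qed

text \<open>For k \<ge> 3 this is the number of noncrossing Hamiltonian paths, as edge sets, on k points
  in convex position.\<close>
definition ham_path_bound :: "nat \<Rightarrow> nat" where
  "ham_path_bound k = (if k \<le> 2 then 1 else k * 2 ^ (k - 3))"

lemma card_noncrossing_path_edges:
  assumes "finite S"
  shows "card (path_edges ` noncrossing_paths S) \<le> ham_path_bound (card S)"
proof (cases "card S \<le> 2")
  case True
  have "path_edges ` noncrossing_paths S \<subseteq> {if card S = 2 then {S} else {}}"
  proof
    fix e assume "e \<in> path_edges ` noncrossing_paths S"
    then obtain R where R: "R \<in> noncrossing_paths S" "e = path_edges R"
      by blast
    then have "distinct R" "set R = S" "length R = card S"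
      using noncrossing_paths_length by (auto simp: noncrossing_paths_def)
    then show "e \<in> {if card S = 2 then {S} else {}}"
      using R(2) path_edges_short[of R] True by simp
  qed
  then show ?thesis
    using True card_mono[of "{if card S = 2 then {S} else {}}"] by (fastforce simp: ham_path_bound_def)
next
  case False
  define k where "k = card S - 3"
  have k: "card S = Suc (Suc (Suc k))"
    using False by (simp add: k_def)
  let ?A = "{R \<in> noncrossing_paths S. hd R < last R}"
  have fin: "finite ?A"
    using assms finite_noncrossing_paths by simp
  have "path_edges ` noncrossing_paths S \<subseteq> path_edges ` ?A"
  proof
    fix e assume "e \<in> path_edges ` noncrossing_paths S"
    then obtain R where R: "R \<in> noncrossing_paths S" "e = path_edges R"
      by blast
    then have "R \<in> ?A \<or> rev R \<in> ?A"
      using noncrossing_paths_hd_neq_last[OF R(1)] k noncrossing_paths_rev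
      by (auto simp: hd_rev last_rev neq_iff)
    then show "e \<in> path_edges ` ?A"
      using R(2) path_edges_rev[of R] by blast
  qed
  then have "card (path_edges ` noncrossing_paths S) \<le> card (path_edges ` ?A)"
    using fin by (intro card_mono) auto
  also have "\<dots> \<le> card ?A"
    using fin by (rule card_image_le)
  also have "2 * card ?A \<le> card S * 2 ^ Suc k"
    using card_noncrossing_paths_hd_less_last[OF assms] card_noncrossing_paths[OF assms] k by simp
  then have "card ?A \<le> card S * 2 ^ k"
    by simp
  finally show ?thesis
    using k by (simp add: ham_path_bound_def)
qed

definition path_cover :: "'a list list \<Rightarrow> 'a set \<Rightarrow> bool" where
  "path_cover Rs A \<longleftrightarrow> distinct (concat Rs) \<and> set (concat Rs) = A \<and> [] \<notin> set Rs"

abbreviation cover_edges :: "'a list list \<Rightarrow> 'a set set" where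
  "cover_edges Rs \<equiv> \<Union> (path_edges ` set Rs)"

lemma path_cover_distinct: "path_cover Rs A \<Longrightarrow> r \<in> set Rs \<Longrightarrow> distinct r"
  unfolding path_cover_def by (induction Rs arbitrary: A) auto

lemma path_cover_disjoint:
  "path_cover Rs A \<Longrightarrow> r \<in> set Rs \<Longrightarrow> r' \<in> set Rs \<Longrightarrow> r \<noteq> r' \<Longrightarrow> set r \<inter> set r' = {}"
  unfolding path_cover_def by (induction Rs arbitrary: A) auto

lemma path_cover_subset: "path_cover Rs A \<Longrightarrow> r \<in> set Rs \<Longrightarrow> set r \<subseteq> A"
  unfolding path_cover_def by auto

lemma cover_edges_subset: "path_cover Rs A \<Longrightarrow> e \<in> cover_edges Rs \<Longrightarrow> e \<subseteq> A"
  using path_cover_subset path_edges_subset by blast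

lemma path_cover_map:
  assumes "path_cover Rs A" "inj_on f A"
  shows "path_cover (map (map f) Rs) (f ` A)"
    and "cover_edges (map (map f) Rs) = (`) f ` cover_edges Rs"
  using assms by (auto simp: path_cover_def distinct_map path_edges_map simp flip: map_concat)

definition noncrossing_forests :: "nat set \<Rightarrow> nat set set set" where
  "noncrossing_forests A = {cover_edges Rs | Rs. path_cover Rs A \<and> noncrossing (cover_edges Rs)}"

definition forest_count :: "nat \<Rightarrow> nat" where
  "forest_count n = card (noncrossing_forests {..<n})"

lemma noncrossing_forests_subset_Pow: "noncrossing_forests A \<subseteq> Pow (Pow A)"
  unfolding noncrossing_forests_def using cover_edges_subset by blast

lemma finite_noncrossing_forests: "finite A \<Longrightarrow> finite (noncrossing_forests A)"
  using noncrossing_forests_subset_Pow by (meson finite_Pow_iff finite_subset)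

lemma noncrossing_forests_empty: "noncrossing_forests {} = {{}}"
proof -
  have "path_cover Rs {} \<longleftrightarrow> Rs = []" for Rs :: "nat list list"
    unfolding path_cover_def by (cases Rs) auto
  then show ?thesis
    by (auto simp: noncrossing_forests_def noncrossing_def)
qed

lemma forest_count_0: "forest_count 0 = 1"
  by (simp add: forest_count_def noncrossing_forests_empty)

lemma inj_on_image_eq_doubletonE:
  assumes "inj_on f A" "e \<subseteq> A" "f ` e = {a, b}"
  obtains a' b' where "e = {a', b'}" "f a' = a" "f b' = b"
proof -
  obtain a' b' where ab: "a' \<in> e" "b' \<in> e" "f a' = a" "f b' = b"
    using assms(3) by (metis image_iff insertI1 insertI2)
  have "e = {a', b'}"
  proof
    show "e \<subseteq> {a', b'}"
    proof
      fix t assume "t \<in> e"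
      then have "f t = f a' \<or> f t = f b'"
        using assms(3) ab by blast
      then show "t \<in> {a', b'}"
        using inj_onD[OF assms(1)] assms(2) ab \<open>t \<in> e\<close> by blast
    qed
  qed (use ab in auto)
  with ab that show ?thesis
    by blast
qed

lemma noncrossing_image:
  assumes f: "strict_mono_on A f" and F: "\<Union> F \<subseteq> A" "noncrossing F"
  shows "noncrossing ((`) f ` F)"
  unfolding noncrossing_def
proof clarify
  fix a b c d e e'
  assume abcd: "a < c" "c < b" "b < d" and e: "{a, b} = f ` e" "e \<in> F"
    and e': "{c, d} = f ` e'" "e' \<in> F"
  have inj: "inj_on f A"
    using f by (rule strict_mono_on_imp_inj_on)
  obtain a' b' where a'b': "e = {a', b'}" "f a' = a" "f b' = b"
    using inj_on_image_eq_doubletonE[OF inj _ e(1)[symmetric]] e(2) F(1) by blast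
  obtain c' d' where c'd': "e' = {c', d'}" "f c' = c" "f d' = d"
    using inj_on_image_eq_doubletonE[OF inj _ e'(1)[symmetric]] e'(2) F(1) by blast
  have "{a', b', c', d'} \<subseteq> A"
    using F(1) e(2) e'(2) a'b'(1) c'd'(1) by auto
  then have "a' < c'" "c' < b'" "b' < d'"
    using abcd a'b' c'd' strict_mono_on_less[OF f] by auto
  then show False
    using F(2) e(2) e'(2) a'b'(1) c'd'(1) unfolding noncrossing_def by blast
qed

lemma noncrossing_forests_image:
  assumes f: "strict_mono_on A f" and F: "F \<in> noncrossing_forests A"
  shows "(`) f ` F \<in> noncrossing_forests (f ` A)"
proof -
  obtain Rs where Rs: "path_cover Rs A" "noncrossing (cover_edges Rs)" "F = cover_edges Rs"
    using F by (auto simp: noncrossing_forests_def)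
  let ?Rs = "map (map f) Rs"
  have inj: "inj_on f A"
    using f by (rule strict_mono_on_imp_inj_on)
  have "path_cover ?Rs (f ` A)"
    using path_cover_map(1)[OF Rs(1) inj] .
  moreover have "cover_edges ?Rs = (`) f ` F"
    using path_cover_map(2)[OF Rs(1) inj] Rs(3) by simp
  moreover have "noncrossing ((`) f ` F)"
    using noncrossing_image[OF f _ Rs(2)] Rs cover_edges_subset by blast
  ultimately show ?thesis
    unfolding noncrossing_forests_def by (intro CollectI exI[of _ ?Rs]) simp
qed

lemma card_noncrossing_forests_le_image:
  assumes "finite A" "strict_mono_on A f"
  shows "card (noncrossing_forests A) \<le> card (noncrossing_forests (f ` A))"
proof (rule card_inj_on_le)
  have "inj_on ((`) f) (Pow A)"
    using strict_mono_on_imp_inj_on[OF assms(2)] by (rule inj_on_image_Pow)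
  then have "inj_on ((`) ((`) f)) (Pow (Pow A))"
    by (rule inj_on_image_Pow)
  then show "inj_on ((`) ((`) f)) (noncrossing_forests A)"
    using noncrossing_forests_subset_Pow by (rule inj_on_subset)
  show "(`) ((`) f) ` noncrossing_forests A \<subseteq> noncrossing_forests (f ` A)"
    using noncrossing_forests_image[OF assms(2)] by blast
  show "finite (noncrossing_forests (f ` A))"
    using assms(1) by (simp add: finite_noncrossing_forests)
qed

lemma strict_mono_on_inv_into:
  fixes f :: "'a::linorder \<Rightarrow> 'b::linorder"
  assumes "strict_mono_on A f"
  shows "strict_mono_on (f ` A) (inv_into A f)"
proof (rule strict_mono_onI)
  fix x y assume "x \<in> f ` A" "y \<in> f ` A" "x < y"
  then show "inv_into A f x < inv_into A f y"
    using strict_mono_on_less[OF assms, of "inv_into A f x" "inv_into A f y"]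
    by (simp add: inv_into_into f_inv_into_f)
qed

lemma card_noncrossing_forests_image:
  assumes "finite A" "strict_mono_on A f"
  shows "card (noncrossing_forests (f ` A)) = card (noncrossing_forests A)"
proof -
  have "inv_into A f ` f ` A = A"
    using strict_mono_on_imp_inj_on[OF assms(2)] by simp
  then have "card (noncrossing_forests (f ` A)) \<le> card (noncrossing_forests A)"
    using card_noncrossing_forests_le_image[OF _ strict_mono_on_inv_into[OF assms(2)]] assms(1)
    by simp
  then show ?thesis
    using card_noncrossing_forests_le_image[OF assms] by simp
qed

lemma card_noncrossing_forests_interval:
  "card (noncrossing_forests {a..<b}) = forest_count (b - a)"
proof -
  have "{a..<b} = (+) a ` {..<b - a}"
  proof
    show "{a..<b} \<subseteq> (+) a ` {..<b - a}"
    proof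
      fix x assume "x \<in> {a..<b}"
      then have "x = a + (x - a)" "x - a \<in> {..<b - a}"
        by auto
      then show "x \<in> (+) a ` {..<b - a}"
        by blast
    qed
  qed auto
  moreover have "strict_mono_on {..<b - a} ((+) a)"
    by (simp add: strict_mono_on_def)
  ultimately show ?thesis
    using card_noncrossing_forests_image[of "{..<b - a}" "(+) a"] by (simp add: forest_count_def)
qed

lemma noncrossing_forests_restrict:
  assumes Rs: "path_cover Rs A" "noncrossing (cover_edges Rs)"
    and closed: "\<And>r. r \<in> set Rs \<Longrightarrow> set r \<inter> B \<noteq> {} \<Longrightarrow> set r \<subseteq> B"
  shows "{e \<in> cover_edges Rs. e \<subseteq> B} \<in> noncrossing_forests (A \<inter> B)"
proof -
  let ?Rs = "filter (\<lambda>r. set r \<subseteq> B) Rs"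
  have "path_cover ?Rs (A \<inter> B)"
  proof -
    have "distinct (concat ?Rs)"
      using Rs(1) unfolding path_cover_def by (induction Rs arbitrary: A) auto
    moreover have "set (concat ?Rs) = A \<inter> B"
      using Rs(1) closed unfolding path_cover_def by auto
    ultimately show ?thesis
      using Rs(1) by (auto simp: path_cover_def)
  qed
  moreover have "cover_edges ?Rs = {e \<in> cover_edges Rs. e \<subseteq> B}"
  proof
    show "cover_edges ?Rs \<subseteq> {e \<in> cover_edges Rs. e \<subseteq> B}"
      using path_edges_subset by fastforce
    show "{e \<in> cover_edges Rs. e \<subseteq> B} \<subseteq> cover_edges ?Rs"
    proof clarify
      fix e r assume "r \<in> set Rs" "e \<in> path_edges r" "e \<subseteq> B"
      moreover obtain a b where "e = {a, b}"
        using path_edges_distinct[OF path_cover_distinct[OF Rs(1)]] calculation by metis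
      ultimately have "set r \<subseteq> B"
        using closed path_edges_subset by blast
      with \<open>r \<in> set Rs\<close> \<open>e \<in> path_edges r\<close> show "e \<in> cover_edges ?Rs"
        by auto
    qed
  qed
  moreover have "noncrossing {e \<in> cover_edges Rs. e \<subseteq> B}"
    using Rs(2) by (rule noncrossing_subset) blast
  ultimately show ?thesis
    unfolding noncrossing_forests_def by (intro CollectI exI[of _ ?Rs]) simp
qed

definition gap :: "nat \<Rightarrow> nat set \<Rightarrow> nat \<Rightarrow> nat set" where
  "gap n S s = {x. s < x \<and> x < n \<and> (\<forall>t\<in>S. s < t \<longrightarrow> x < t)}"

lemma gap_interval:
  assumes "finite S"
  shows "gap n S s = {Suc s..<Min (insert n {t \<in> S. s < t})}"
proof -
  have "finite (insert n {t \<in> S. s < t})"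
    using assms by simp
  then show ?thesis
    by (auto simp: gap_def Min_gr_iff)
qed

lemma finite_gap [simp]: "finite (gap n S s)"
  unfolding gap_def by (rule finite_subset[of _ "{..<n}"]) auto

lemma card_noncrossing_forests_gap:
  "finite S \<Longrightarrow> card (noncrossing_forests (gap n S s)) = forest_count (card (gap n S s))"
  using gap_interval card_noncrossing_forests_interval by simp

lemma gaps_disjoint: "s \<in> S \<Longrightarrow> s' \<in> S \<Longrightarrow> s \<noteq> s' \<Longrightarrow> gap n S s \<inter> gap n S s' = {}"
  unfolding gap_def by (cases s s' rule: linorder_cases) auto

lemma exists_gap:
  assumes "finite S" "0 \<in> S" "x < n" "x \<notin> S"
  shows "\<exists>s\<in>S. x \<in> gap n S s"
proof -
  let ?T = "{t \<in> S. t < x}"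
  have T: "finite ?T" "?T \<noteq> {}"
    using assms by (auto intro!: exI[of _ 0] gr0I)
  have le: "t \<le> Max ?T" if "t \<in> ?T" for t
    using T(1) that by (rule Max_ge)
  have Max: "Max ?T \<in> S" "Max ?T < x"
    using Max_in[OF T] by auto
  have "x < t" if "t \<in> S" "Max ?T < t" for t
  proof -
    have "\<not> t < x"
    proof
      assume "t < x"
      then have "t \<le> Max ?T"
        using le that(1) by blast
      with that(2) show False
        by simp
    qed
    moreover have "t \<noteq> x"
      using assms(4) that(1) by blast
    ultimately show ?thesis
      by simp
  qed
  then have "x \<in> gap n S (Max ?T)"
    using Max(2) assms(3) by (simp add: gap_def)
  then show ?thesis
    using Max(1) by blast
qed

lemma gap_partition:
  assumes "S \<subseteq> {..<n}" "0 \<in> S"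
  shows "(\<Sum>s\<in>S. Suc (card (gap n S s))) = n"
proof -
  have fin: "finite S"
    using assms(1) by (rule finite_subset) simp
  have "{..<n} \<subseteq> S \<union> (\<Union>s\<in>S. gap n S s)"
    using exists_gap[OF fin assms(2)] by blast
  moreover have "S \<union> (\<Union>s\<in>S. gap n S s) \<subseteq> {..<n}"
    using assms(1) by (auto simp: gap_def)
  ultimately have "{..<n} = S \<union> (\<Union>s\<in>S. gap n S s)"
    by blast
  then have "n = card (S \<union> (\<Union>s\<in>S. gap n S s))"
    by (metis card_lessThan)
  also have "\<dots> = card S + (\<Sum>s\<in>S. card (gap n S s))"
    using fin gaps_disjoint
    by (subst card_Un_disjoint) (auto simp: card_UN_disjoint gap_def)
  finally show ?thesis
    by (simp add: sum_Suc)
qed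

text \<open>In a noncrossing path cover of {..<n}, let R be the path through 0. No other path has
  vertices on both sides of a vertex t of R: an edge of it jumping over t would enclose t but
  not 0, so R would have to cross it.\<close>
lemma path_cover_root_path_separates:
  assumes Rs: "path_cover Rs A" "noncrossing (cover_edges Rs)"
    and R: "R \<in> set Rs" "0 \<in> set R" "t \<in> set R"
    and r: "r \<in> set Rs" "r \<noteq> R" "x \<in> set r" "y \<in> set r" "x < t"
  shows "y < t"
proof (rule ccontr)
  have disj: "set r \<inter> set R = {}"
    using path_cover_disjoint[OF Rs(1) r(1) R(1) r(2)] .
  assume "\<not> y < t"
  then obtain v w where vw: "{v, w} \<in> path_edges r" "v < t" "\<not> w < t"
    using path_edges_change[of x r y "\<lambda>z. z < t"] r by blast
  have "v \<in> set r" "w \<in> set r"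
    using path_edges_subset[OF vw(1)] by auto
  then have "v \<notin> set R" "w \<notin> set R" "t < w" "0 < v"
    using disj vw R by (auto intro: gr0I le_neq_trans simp: not_less)
  moreover have "{v, w} \<in> cover_edges Rs" "path_edges R \<subseteq> cover_edges Rs"
    using vw(1) r(1) R(1) by auto
  ultimately have "v < 0"
    using noncrossing_path_side[OF Rs(2), of v w R t 0] R vw(2) by blast
  then show False
    by simp
qed

lemma path_cover_path_in_gap:
  assumes Rs: "path_cover Rs {..<n}" "noncrossing (cover_edges Rs)"
    and R: "R \<in> set Rs" "0 \<in> set R" "s \<in> set R"
    and r: "r \<in> set Rs" "x \<in> set r" "x \<in> gap n (set R) s"
  shows "set r \<subseteq> gap n (set R) s"
proof
  fix y assume y: "y \<in> set r"
  have "x \<notin> set R"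
    using r(3) by (auto simp: gap_def)
  then have "r \<noteq> R"
    using r(2) by blast
  then have "y \<notin> set R"
    using path_cover_disjoint[OF Rs(1) r(1) R(1)] y by blast
  have "s < x"
    using r(3) by (simp add: gap_def)
  then have "\<not> y < s"
    using path_cover_root_path_separates[OF Rs R(1,2,3) r(1) \<open>r \<noteq> R\<close> y r(2)] by auto
  moreover have "y \<noteq> s"
    using \<open>y \<notin> set R\<close> R(3) by blast
  ultimately have "s < y"
    by simp
  moreover have "y < t" if "t \<in> set R" "s < t" for t
  proof -
    have "x < t"
      using r(3) that by (simp add: gap_def)
    then show ?thesis
      using path_cover_root_path_separates[OF Rs R(1,2) that(1) r(1) \<open>r \<noteq> R\<close> r(2) y]
      by blast
  qed
  moreover have "y < n"
    using Rs(1) r(1) y path_cover_subset by blast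
  ultimately show "y \<in> gap n (set R) s"
    by (simp add: gap_def)
qed

lemma path_cover_gap_forest:
  assumes Rs: "path_cover Rs {..<n}" "noncrossing (cover_edges Rs)"
    and R: "R \<in> set Rs" "0 \<in> set R" "s \<in> set R"
  shows "{e \<in> cover_edges Rs. e \<subseteq> gap n (set R) s} \<in> noncrossing_forests (gap n (set R) s)"
proof -
  have "{..<n} \<inter> gap n (set R) s = gap n (set R) s"
    by (auto simp: gap_def)
  moreover have "set r \<subseteq> gap n (set R) s"
    if "r \<in> set Rs" "set r \<inter> gap n (set R) s \<noteq> {}" for r
    using path_cover_path_in_gap[OF Rs R, of r] that by blast
  ultimately show ?thesis
    using noncrossing_forests_restrict[OF Rs, of "gap n (set R) s"] by simp
qed

lemma path_cover_edges_split:
  assumes Rs: "path_cover Rs {..<n}" "noncrossing (cover_edges Rs)"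
    and R: "R \<in> set Rs" "0 \<in> set R"
  shows "cover_edges Rs =
    path_edges R \<union> (\<Union>s\<in>set R. {e \<in> cover_edges Rs. e \<subseteq> gap n (set R) s})"
proof (rule antisym)
  show "cover_edges Rs \<subseteq>
      path_edges R \<union> (\<Union>s\<in>set R. {e \<in> cover_edges Rs. e \<subseteq> gap n (set R) s})"
  proof
    fix e assume "e \<in> cover_edges Rs"
    then obtain r where r: "r \<in> set Rs" "e \<in> path_edges r"
      by blast
    show "e \<in> path_edges R \<union> (\<Union>s\<in>set R. {e \<in> cover_edges Rs. e \<subseteq> gap n (set R) s})"
    proof (cases "r = R")
      case False
      obtain a b where e: "e = {a, b}"
        using path_edges_distinct[OF path_cover_distinct[OF Rs(1) r(1)] r(2)] by metis
      then have a: "a \<in> set r" "a < n"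
        using path_edges_subset[OF r(2)] path_cover_subset[OF Rs(1) r(1)] by auto
      then have "a \<notin> set R"
        using path_cover_disjoint[OF Rs(1) r(1) R(1) False] by blast
      then obtain s where s: "s \<in> set R" "a \<in> gap n (set R) s"
        using exists_gap[OF _ R(2) a(2)] by blast
      then have "e \<subseteq> gap n (set R) s"
        using path_cover_path_in_gap[OF Rs R s(1) r(1) a(1)] path_edges_subset[OF r(2)] by blast
      then show ?thesis
        using r s(1) by blast
    qed (use r in blast)
  qed
qed (use R(1) in blast)

lemma noncrossing_forest_decomposition:
  assumes F: "F \<in> noncrossing_forests {..<n}" and n: "0 < n"
  shows "\<exists>S. S \<subseteq> {..<n} \<and> 0 \<in> S \<and>
    F \<in> (\<lambda>(P, H). P \<union> \<Union> (H ` S)) `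
      (path_edges ` noncrossing_paths S \<times> (\<Pi>\<^sub>E s\<in>S. noncrossing_forests (gap n S s)))"
proof -
  obtain Rs where Rs: "path_cover Rs {..<n}" "noncrossing (cover_edges Rs)" "F = cover_edges Rs"
    using F by (auto simp: noncrossing_forests_def)
  then obtain R where R: "R \<in> set Rs" "0 \<in> set R"
    using n by (auto simp: path_cover_def)
  define S where "S = set R"
  define H where "H = (\<lambda>s\<in>S. {e \<in> F. e \<subseteq> gap n S s})"
  have "R \<in> noncrossing_paths S"
    using path_cover_distinct[OF Rs(1) R(1)] noncrossing_subset[OF Rs(2)] R(1)
    by (auto simp: noncrossing_paths_def S_def)
  moreover have "H \<in> (\<Pi>\<^sub>E s\<in>S. noncrossing_forests (gap n S s))"
    using path_cover_gap_forest[OF Rs(1,2) R] Rs(3) by (simp add: H_def S_def)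
  moreover have "F = path_edges R \<union> \<Union> (H ` S)"
  proof -
    have "F = path_edges R \<union> (\<Union>s\<in>S. {e \<in> F. e \<subseteq> gap n S s})"
      using path_cover_edges_split[OF Rs(1,2) R] by (simp only: Rs(3)[symmetric] S_def)
    then show ?thesis
      by (simp add: H_def)
  qed
  moreover have "S \<subseteq> {..<n}" "0 \<in> S"
    using path_cover_subset[OF Rs(1) R(1)] R(2) by (auto simp: S_def)
  ultimately show ?thesis
    by blast
qed

lemma forest_count_le_sum:
  assumes n: "0 < n"
  shows "forest_count n \<le> (\<Sum>S | S \<subseteq> {..<n} \<and> 0 \<in> S.
     ham_path_bound (card S) * (\<Prod>s\<in>S. forest_count (card (gap n S s))))"
proof -
  let ?SS = "{S. S \<subseteq> {..<n} \<and> 0 \<in> S}"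
  let ?dom = "\<lambda>S. path_edges ` noncrossing_paths S \<times>
    (\<Pi>\<^sub>E s\<in>S. noncrossing_forests (gap n S s))"
  let ?img = "\<lambda>S. (\<lambda>(P, H). P \<union> \<Union> (H ` S)) ` ?dom S"
  have finSS: "finite ?SS"
    by (rule finite_subset[of _ "Pow {..<n}"]) auto
  have fin_dom: "finite (?dom S)" if "S \<in> ?SS" for S
  proof -
    have "finite S"
      using that finite_subset by auto
    then show ?thesis
      by (simp add: finite_noncrossing_paths finite_noncrossing_forests finite_PiE)
  qed
  have "forest_count n \<le> card (\<Union>S\<in>?SS. ?img S)"
    unfolding forest_count_def
    using noncrossing_forest_decomposition[OF _ n] fin_dom finSS by (intro card_mono) auto
  also have "\<dots> \<le> (\<Sum>S\<in>?SS. card (?img S))"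
    by (rule card_UN_le[OF finSS])
  also have "\<dots> \<le> (\<Sum>S\<in>?SS. ham_path_bound (card S) * (\<Prod>s\<in>S. forest_count (card (gap n S s))))"
  proof (rule sum_mono)
    fix S assume S: "S \<in> ?SS"
    then have fS: "finite S"
      using finite_subset by auto
    have "card (?img S) \<le> card (?dom S)"
      by (rule card_image_le[OF fin_dom[OF S]])
    also have "\<dots> = card (path_edges ` noncrossing_paths S) *
        (\<Prod>s\<in>S. forest_count (card (gap n S s)))"
      by (simp add: card_cartesian_product card_PiE[OF fS] card_noncrossing_forests_gap[OF fS])
    also have "\<dots> \<le> ham_path_bound (card S) * (\<Prod>s\<in>S. forest_count (card (gap n S s)))"
      using card_noncrossing_path_edges[OF fS] by simp
    finally show "card (?img S)
        \<le> ham_path_bound (card S) * (\<Prod>s\<in>S. forest_count (card (gap n S s)))" .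
  qed
  finally show ?thesis .
qed

definition rooted_subsets :: "nat \<Rightarrow> nat \<Rightarrow> nat \<Rightarrow> nat set set" where
  "rooted_subsets a n k = {S. S \<subseteq> {a..<n} \<and> a \<in> S \<and> card S = k}"

lemma finite_rooted_subsets [simp]: "finite (rooted_subsets a n k)"
  unfolding rooted_subsets_def by (rule finite_subset[of _ "Pow {..<n}"]) auto

lemma rooted_subsets_finite: "S \<in> rooted_subsets a n k \<Longrightarrow> finite S"
  unfolding rooted_subsets_def by (blast intro: finite_subset[OF _ finite_atLeastLessThan])

lemma rooted_subsets_not_mem: "S \<in> rooted_subsets c n k \<Longrightarrow> a < c \<Longrightarrow> a \<notin> S"
  by (auto simp: rooted_subsets_def)

lemma rooted_subsets_1: "a < n \<Longrightarrow> rooted_subsets a n 1 = {{a}}"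
  unfolding rooted_subsets_def by (auto simp: card_1_singleton_iff)

lemma rooted_subsets_Suc:
  assumes k: "1 \<le> k"
  shows "rooted_subsets a n (Suc k) = (\<Union>c\<in>{a<..<n}. insert a ` rooted_subsets c n k)"
proof
  show "rooted_subsets a n (Suc k) \<subseteq> (\<Union>c\<in>{a<..<n}. insert a ` rooted_subsets c n k)"
  proof
    fix S assume S: "S \<in> rooted_subsets a n (Suc k)"
    let ?S' = "S - {a}"
    have fin: "finite ?S'" and card: "card ?S' = k"
      using S rooted_subsets_finite[OF S] by (auto simp: rooted_subsets_def)
    have ne: "?S' \<noteq> {}"
    proof
      assume "?S' = {}"
      with card k show False
        by simp
    qed
    define c where "c = Min ?S'"
    have c: "c \<in> ?S'" "\<And>t. t \<in> ?S' \<Longrightarrow> c \<le> t"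
      using Min_in[OF fin ne] Min_le[OF fin] by (auto simp: c_def)
    have "?S' \<subseteq> {c..<n}"
    proof
      fix x assume "x \<in> ?S'"
      then show "x \<in> {c..<n}"
        using c(2)[of x] S by (auto simp: rooted_subsets_def)
    qed
    then have "?S' \<in> rooted_subsets c n k" "c \<in> {a<..<n}"
      using S card c(1) by (auto simp: rooted_subsets_def)
    moreover have "S = insert a ?S'"
      using S by (auto simp: rooted_subsets_def)
    ultimately show "S \<in> (\<Union>c\<in>{a<..<n}. insert a ` rooted_subsets c n k)"
      by blast
  qed
  show "(\<Union>c\<in>{a<..<n}. insert a ` rooted_subsets c n k) \<subseteq> rooted_subsets a n (Suc k)"
  proof clarify
    fix c S' assume c: "c \<in> {a<..<n}" and S': "S' \<in> rooted_subsets c n k"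
    then have "a \<notin> S'" "finite S'"
      using rooted_subsets_not_mem[OF S'] rooted_subsets_finite[OF S'] by auto
    with c S' show "insert a S' \<in> rooted_subsets a n (Suc k)"
      by (auto simp: rooted_subsets_def)
  qed
qed

lemma inj_on_insert_rooted_subsets: "a < c \<Longrightarrow> inj_on (insert a) (rooted_subsets c n k)"
  by (rule inj_onI) (metis insert_ident rooted_subsets_not_mem)

lemma insert_rooted_subsets_disjoint:
  assumes "a < c" "a < c'" "c \<noteq> c'"
  shows "insert a ` rooted_subsets c n k \<inter> insert a ` rooted_subsets c' n k = {}"
proof -
  have "S \<noteq> S'" if "S \<in> rooted_subsets c n k" "S' \<in> rooted_subsets c' n k" for S S'
  proof
    assume "S = S'"
    then have "c \<in> {c'..<n}" "c' \<in> {c..<n}"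
      using that unfolding rooted_subsets_def by blast+
    with assms(3) show False
      by simp
  qed
  then show ?thesis
    using assms by (auto simp: insert_ident rooted_subsets_not_mem)
qed

lemma gap_insert_rooted_subset:
  assumes "S \<in> rooted_subsets c n k" "a < c"
  shows "gap n (insert a S) a = {Suc a..<c}"
    and "s \<in> S \<Longrightarrow> gap n (insert a S) s = gap n S s"
  using assms by (auto simp: gap_def rooted_subsets_def)

definition gap_weight :: "real \<Rightarrow> nat \<Rightarrow> real" where
  "gap_weight z g = z ^ Suc g * real (forest_count g)"

text \<open>Each S in rooted_subsets a n k cuts {a..<n} into k blocks, each consisting of an element
  s of S followed by its gap; the block of s is weighted by the forests on the gap.\<close>
definition composition_weight :: "real \<Rightarrow> nat \<Rightarrow> nat \<Rightarrow> nat \<Rightarrow> real" where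
  "composition_weight z a n k =
     (\<Sum>S\<in>rooted_subsets a n k. \<Prod>s\<in>S. gap_weight z (card (gap n S s)))"

lemma gap_weight_nonneg: "0 \<le> z \<Longrightarrow> 0 \<le> gap_weight z g"
  by (simp add: gap_weight_def)

lemma composition_weight_nonneg: "0 \<le> z \<Longrightarrow> 0 \<le> composition_weight z a n k"
  unfolding composition_weight_def by (intro sum_nonneg prod_nonneg gap_weight_nonneg)

lemma composition_weight_empty: "composition_weight z a a k = 0"
  by (simp add: composition_weight_def rooted_subsets_def)

lemma composition_weight_1: "a < n \<Longrightarrow> composition_weight z a n 1 = gap_weight z (n - Suc a)"
proof -
  assume "a < n"
  moreover have "gap n {a} a = {Suc a..<n}"
    by (auto simp: gap_def)
  ultimately show ?thesis
    unfolding composition_weight_def rooted_subsets_1[OF \<open>a < n\<close>] by simp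
qed

lemma composition_weight_Suc:
  assumes k: "1 \<le> k"
  shows "composition_weight z a n (Suc k) =
    (\<Sum>c\<in>{a<..<n}. gap_weight z (c - Suc a) * composition_weight z c n k)"
proof -
  let ?w = "\<lambda>S. \<Prod>s\<in>S. gap_weight z (card (gap n S s))"
  have "composition_weight z a n (Suc k) = (\<Sum>c\<in>{a<..<n}. sum ?w (insert a ` rooted_subsets c n k))"
    unfolding composition_weight_def rooted_subsets_Suc[OF k]
    by (rule sum.UNION_disjoint) (simp_all add: insert_rooted_subsets_disjoint)
  also have "\<dots> = (\<Sum>c\<in>{a<..<n}. \<Sum>S\<in>rooted_subsets c n k. ?w (insert a S))"
  proof (rule sum.cong[OF refl])
    fix c assume "c \<in> {a<..<n}"
    then have "a < c"
      by simp
    then have "sum ?w (insert a ` rooted_subsets c n k) = sum (?w \<circ> insert a) (rooted_subsets c n k)"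
      by (rule sum.reindex[OF inj_on_insert_rooted_subsets])
    then show "sum ?w (insert a ` rooted_subsets c n k) = (\<Sum>S\<in>rooted_subsets c n k. ?w (insert a S))"
      by (simp only: comp_def)
  qed
  also have "\<dots> = (\<Sum>c\<in>{a<..<n}. \<Sum>S\<in>rooted_subsets c n k. gap_weight z (c - Suc a) * ?w S)"
  proof (intro sum.cong refl)
    fix c S assume c: "c \<in> {a<..<n}" and S: "S \<in> rooted_subsets c n k"
    have "finite S" "a \<notin> S"
      using rooted_subsets_finite[OF S] rooted_subsets_not_mem[OF S] c by auto
    then show "?w (insert a S) = gap_weight z (c - Suc a) * ?w S"
      using gap_insert_rooted_subset[OF S] c by simp
  qed
  finally show ?thesis
    by (simp add: composition_weight_def sum_distrib_left)
qed

lemma sum_greaterThanLessThan_shift: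
  "(\<Sum>c\<in>{a<..<a + Suc m}. h c) = (\<Sum>j<m. h (Suc (a + j)))"
proof -
  have "{a<..<a + Suc m} = (\<lambda>j. Suc (a + j)) ` {..<m}"
  proof
    show "{a<..<a + Suc m} \<subseteq> (\<lambda>j. Suc (a + j)) ` {..<m}"
    proof
      fix c assume "c \<in> {a<..<a + Suc m}"
      then have "c = Suc (a + (c - Suc a))" "c - Suc a < m"
        by auto
      then show "c \<in> (\<lambda>j. Suc (a + j)) ` {..<m}"
        by blast
    qed
  qed auto
  moreover have "inj_on (\<lambda>j. Suc (a + j)) {..<m}"
    by (simp add: inj_on_def)
  ultimately show ?thesis
    by (simp add: sum.reindex)
qed

lemma sum_composition_weight_shift:
  "(\<Sum>c\<in>{a<..<a + m}. gap_weight z (c - Suc a) * composition_weight z c (a + m) k) =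
    (\<Sum>g<m. gap_weight z g * composition_weight z (Suc (a + g)) (a + m) k)"
proof (cases m)
  case (Suc m')
  then show ?thesis
    using sum_greaterThanLessThan_shift[where a = a and m = m'
        and h = "\<lambda>c. gap_weight z (c - Suc a) * composition_weight z c (a + m) k"]
    by (simp add: composition_weight_empty)
qed simp

lemma sum_composition_weight_le:
  assumes k: "1 \<le> k" and z: "0 \<le> z"
  shows "(\<Sum>m\<le>N. composition_weight z a (a + m) k) \<le> (\<Sum>g<N. gap_weight z g) ^ k"
  using k
proof (induction k arbitrary: a N rule: nat_induct_at_least)
  case base
  have "(\<Sum>m\<le>N. composition_weight z a (a + m) 1) = (\<Sum>g<N. gap_weight z g)"
  proof (induction N)
    case (Suc N)
    have "(\<Sum>m\<le>Suc N. composition_weight z a (a + m) 1) =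
        (\<Sum>m\<le>N. composition_weight z a (a + m) 1) + composition_weight z a (a + Suc N) 1"
      by simp
    also have "composition_weight z a (a + Suc N) 1 = gap_weight z N"
      using composition_weight_1[of a "a + Suc N" z] by simp
    finally show ?case
      using Suc.IH by simp
  qed (simp add: composition_weight_empty)
  then show ?case
    by simp
next
  case (Suc k)
  let ?T = "\<lambda>N. \<Sum>g<N. gap_weight z g"
  let ?Q = "\<lambda>g M. \<Sum>m\<le>M. composition_weight z (Suc (a + g)) (Suc (a + g) + m) k"
  have "(\<Sum>m\<le>N. composition_weight z a (a + m) (Suc k)) =
      (\<Sum>m\<le>N. \<Sum>g<m. gap_weight z g * composition_weight z (Suc (a + g)) (a + m) k)"
    using composition_weight_Suc[OF Suc.hyps(1)] sum_composition_weight_shift by simp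
  also have "\<dots> = (\<Sum>g<N. \<Sum>m\<in>{Suc g..N}. gap_weight z g * composition_weight z (Suc (a + g)) (a + m) k)"
    by (rule sum.nested_swap')
  also have "\<dots> = (\<Sum>g<N. gap_weight z g * ?Q g (N - Suc g))"
  proof (intro sum.cong refl)
    fix g assume "g \<in> {..<N}"
    then have "(\<Sum>m\<in>{Suc g..N}. composition_weight z (Suc (a + g)) (a + m) k) = ?Q g (N - Suc g)"
      by (intro sum.reindex_bij_witness[where j = "\<lambda>m. m - Suc g" and i = "\<lambda>m. Suc g + m"]) auto
    then show "(\<Sum>m\<in>{Suc g..N}. gap_weight z g * composition_weight z (Suc (a + g)) (a + m) k) =
        gap_weight z g * ?Q g (N - Suc g)"
      by (simp add: sum_distrib_left[symmetric])
  qed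
  also have "\<dots> \<le> (\<Sum>g<N. gap_weight z g * ?T N ^ k)"
  proof (intro sum_mono mult_left_mono gap_weight_nonneg z)
    fix g
    have "?Q g (N - Suc g) \<le> ?T (N - Suc g) ^ k"
      by (rule Suc.IH)
    also have "\<dots> \<le> ?T N ^ k"
      using z by (intro power_mono sum_mono2 sum_nonneg gap_weight_nonneg) auto
    finally show "?Q g (N - Suc g) \<le> ?T N ^ k" .
  qed
  also have "\<dots> = ?T N ^ Suc k"
    by (simp add: sum_distrib_right[symmetric])
  finally show ?case .
qed

lemma forest_count_weighted_le:
  assumes n: "0 < n" and z: "0 < z"
  shows "real (forest_count n) * z ^ n \<le>
    (\<Sum>k\<in>{1..n}. real (ham_path_bound k) * composition_weight z 0 n k)"
proof -
  let ?SS = "{S. S \<subseteq> {..<n} \<and> 0 \<in> S}"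
  let ?w = "\<lambda>S. \<Prod>s\<in>S. gap_weight z (card (gap n S s))"
  have finSS: "finite ?SS"
    by (rule finite_subset[of _ "Pow {..<n}"]) auto
  have weight: "(\<Prod>s\<in>S. real (forest_count (card (gap n S s)))) * z ^ n = ?w S" if "S \<in> ?SS" for S
  proof -
    have "z ^ n = z ^ (\<Sum>s\<in>S. Suc (card (gap n S s)))"
      using gap_partition[of S n] that by simp
    also have "\<dots> = (\<Prod>s\<in>S. z ^ Suc (card (gap n S s)))"
      by (rule power_sum)
    finally have "z ^ n = (\<Prod>s\<in>S. z ^ Suc (card (gap n S s)))" .
    then show ?thesis
      by (simp add: gap_weight_def prod.distrib mult.commute)
  qed
  have "real (forest_count n) \<le> real (\<Sum>S\<in>?SS. ham_path_bound (card S) *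
      (\<Prod>s\<in>S. forest_count (card (gap n S s))))"
    using forest_count_le_sum[OF n] by (simp only: of_nat_le_iff)
  then have "real (forest_count n) * z ^ n \<le>
      (\<Sum>S\<in>?SS. real (ham_path_bound (card S)) * (\<Prod>s\<in>S. real (forest_count (card (gap n S s))))) * z ^ n"
    using z by (simp add: of_nat_mult of_nat_prod)
  also have "\<dots> = (\<Sum>S\<in>?SS. real (ham_path_bound (card S)) * ?w S)"
    using weight by (simp add: sum_distrib_right mult.assoc)
  also have "\<dots> = (\<Sum>k\<in>{1..n}. \<Sum>S\<in>{S \<in> ?SS. card S = k}. real (ham_path_bound (card S)) * ?w S)"
  proof (rule sum.group[symmetric, OF finSS finite_atLeastAtMost])
    have "card S \<in> {1..n}" if "S \<in> ?SS" for S
      using that card_mono[of "{..<n}" S] by (auto simp: Suc_le_eq card_gt_0_iff finite_subset)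
    then show "card ` ?SS \<subseteq> {1..n}"
      by blast
  qed
  also have "\<dots> = (\<Sum>k\<in>{1..n}. real (ham_path_bound k) * composition_weight z 0 n k)"
  proof (intro sum.cong refl)
    fix k
    have "(\<Sum>S\<in>{S \<in> ?SS. card S = k}. real (ham_path_bound (card S)) * ?w S) =
        (\<Sum>S\<in>rooted_subsets 0 n k. real (ham_path_bound k) * ?w S)"
      by (intro sum.cong) (auto simp: rooted_subsets_def)
    then show "(\<Sum>S\<in>{S \<in> ?SS. card S = k}. real (ham_path_bound (card S)) * ?w S) =
        real (ham_path_bound k) * composition_weight z 0 n k"
      by (simp add: composition_weight_def sum_distrib_left)
  qed
  finally show ?thesis .
qed

text \<open>The generating function F of forest_count satisfies F z \<le> 1 + P (z * F z), where
  P x = \<Sum>k. ham_path_bound k * x ^ k; a Y with 1 + P (z * Y) \<le> Y therefore bounds F z.\<close>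
lemma forest_series_le:
  fixes z Y :: real
  assumes z: "0 < z" and Y: "1 \<le> Y"
    and fixpoint: "\<And>N. 1 + (\<Sum>k\<in>{1..N}. real (ham_path_bound k) * (z * Y) ^ k) \<le> Y"
  shows "(\<Sum>n\<le>N. real (forest_count n) * z ^ n) \<le> Y"
proof (induction N)
  case 0
  then show ?case
    using Y by (simp add: forest_count_0)
next
  case (Suc N)
  let ?Q = "\<lambda>k n. real (ham_path_bound k) * composition_weight z 0 n k"
  have nonneg: "0 \<le> ?Q k n" for k n
    using composition_weight_nonneg z by simp
  have "(\<Sum>n\<le>Suc N. real (forest_count n) * z ^ n) =
      1 + (\<Sum>n\<le>N. real (forest_count (Suc n)) * z ^ Suc n)"
    by (subst sum.atMost_Suc_shift) (simp add: forest_count_0)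
  also have "\<dots> \<le> 1 + (\<Sum>n\<le>N. \<Sum>k\<in>{1..Suc n}. ?Q k (Suc n))"
  proof (intro add_left_mono sum_mono)
    fix n
    show "real (forest_count (Suc n)) * z ^ Suc n \<le> (\<Sum>k\<in>{1..Suc n}. ?Q k (Suc n))"
      using forest_count_weighted_le[of "Suc n" z] z by simp
  qed
  also have "\<dots> \<le> 1 + (\<Sum>n\<le>N. \<Sum>k\<in>{1..Suc N}. ?Q k (Suc n))"
    using nonneg by (intro add_left_mono sum_mono sum_mono2) auto
  also have "\<dots> = 1 + (\<Sum>k\<in>{1..Suc N}. real (ham_path_bound k) *
      (\<Sum>n\<le>N. composition_weight z 0 (Suc n) k))"
    by (subst sum.swap) (simp add: sum_distrib_left)
  also have "\<dots> \<le> 1 + (\<Sum>k\<in>{1..Suc N}. real (ham_path_bound k) * (z * Y) ^ k)"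
  proof (intro add_left_mono sum_mono mult_left_mono)
    fix k assume k: "k \<in> {1..Suc N}"
    have "(\<Sum>n\<le>N. composition_weight z 0 (Suc n) k) = (\<Sum>m\<le>Suc N. composition_weight z 0 (0 + m) k)"
      by (subst sum.atMost_Suc_shift) (simp add: composition_weight_empty)
    also have "\<dots> \<le> (\<Sum>g<Suc N. gap_weight z g) ^ k"
      using k z by (intro sum_composition_weight_le) auto
    also have "(\<Sum>g<Suc N. gap_weight z g) = z * (\<Sum>n\<le>N. real (forest_count n) * z ^ n)"
      unfolding gap_weight_def by (simp add: sum_distrib_left lessThan_Suc_atMost mult_ac)
    also have "\<dots> ^ k \<le> (z * Y) ^ k"
      using Suc z by (intro power_mono mult_left_mono mult_nonneg_nonneg sum_nonneg) auto
    finally show "(\<Sum>n\<le>N. composition_weight z 0 (Suc n) k) \<le> (z * Y) ^ k" .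
  qed simp
  also have "\<dots> \<le> Y"
    by (rule fixpoint)
  finally show ?case .
qed

lemma sum_linear_geometric_eq:
  fixes r :: real
  assumes r: "r \<noteq> 1"
  shows "(\<Sum>j<M. (real j + 3) * r ^ j) + r ^ M * ((real M + 3) / (1 - r) + r / (1 - r)\<^sup>2) =
    3 / (1 - r) + r / (1 - r)\<^sup>2"
proof (induction M)
  case (Suc M)
  have r1: "1 - r \<noteq> 0"
    using r by simp
  have common_denom: "m / (1 - r) + r / (1 - r)\<^sup>2 = (m * (1 - r) + r) / (1 - r)\<^sup>2" for m :: real
    using r1 by (simp add: power2_eq_square add_divide_distrib)
  have num: "r ^ M * ((real M + 3) * (1 - r) + r) =
      (real M + 3) * r ^ M * (1 - r)\<^sup>2 + r ^ Suc M * ((real M + 4) * (1 - r) + r)"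
    by (simp add: power2_eq_square algebra_simps)
  have "r ^ M * ((real M + 3) / (1 - r) + r / (1 - r)\<^sup>2) =
      r ^ M * ((real M + 3) * (1 - r) + r) / (1 - r)\<^sup>2"
    by (simp add: common_denom)
  also have "\<dots> = ((real M + 3) * r ^ M * (1 - r)\<^sup>2 + r ^ Suc M * ((real M + 4) * (1 - r) + r)) /
      (1 - r)\<^sup>2"
    by (simp only: num)
  also have "\<dots> = (real M + 3) * r ^ M * (1 - r)\<^sup>2 / (1 - r)\<^sup>2 +
      r ^ Suc M * ((real M + 4) * (1 - r) + r) / (1 - r)\<^sup>2"
    by (rule add_divide_distrib)
  also have "\<dots> = (real M + 3) * r ^ M + r ^ Suc M * (((real M + 4) * (1 - r) + r) / (1 - r)\<^sup>2)"
    using r1 by simp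
  also have "((real M + 4) * (1 - r) + r) / (1 - r)\<^sup>2 = (real (Suc M) + 3) / (1 - r) + r / (1 - r)\<^sup>2"
    using common_denom[of "real M + 4"] by (simp add: add_ac)
  finally show ?case
    using Suc by simp
qed simp

lemma sum_linear_geometric_le:
  fixes r :: real
  assumes "0 \<le> r" "r < 1"
  shows "(\<Sum>j<M. (real j + 3) * r ^ j) \<le> 3 / (1 - r) + r / (1 - r)\<^sup>2"
proof -
  have "0 \<le> r ^ M * ((real M + 3) / (1 - r) + r / (1 - r)\<^sup>2)"
    using assms by (intro mult_nonneg_nonneg add_nonneg_nonneg) auto
  then show ?thesis
    using sum_linear_geometric_eq[of r M] assms by linarith
qed

lemma sum_ham_path_bound_eq:
  "(\<Sum>k\<in>{1..Suc (Suc M)}. real (ham_path_bound k) * x ^ k) =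
    x + x\<^sup>2 + (\<Sum>j<M. (real j + 3) * 2 ^ j * x ^ (j + 3))"
proof (induction M)
  case 0
  have "{1..Suc (Suc 0)} = {1, 2}"
    by auto
  then show ?case
    by (simp add: ham_path_bound_def)
next
  case (Suc M)
  have "{1..Suc (Suc (Suc M))} = insert (M + 3) {1..Suc (Suc M)}"
    by auto
  moreover have "real (ham_path_bound (M + 3)) = (real M + 3) * 2 ^ M"
    by (simp add: ham_path_bound_def)
  ultimately show ?case
    using Suc by simp
qed

lemma sum_ham_path_bound_le:
  fixes x :: real
  assumes x: "0 \<le> x" "x < 1 / 2"
  shows "(\<Sum>k\<in>{1..N}. real (ham_path_bound k) * x ^ k) \<le>
    x + x\<^sup>2 + x ^ 3 * (3 - 4 * x) / (1 - 2 * x)\<^sup>2"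
proof -
  have "(\<Sum>k\<in>{1..N}. real (ham_path_bound k) * x ^ k) \<le>
      (\<Sum>k\<in>{1..Suc (Suc N)}. real (ham_path_bound k) * x ^ k)"
    using x by (intro sum_mono2) auto
  also have "\<dots> = x + x\<^sup>2 + (\<Sum>j<N. (real j + 3) * 2 ^ j * x ^ (j + 3))"
    by (rule sum_ham_path_bound_eq)
  also have "(\<Sum>j<N. (real j + 3) * 2 ^ j * x ^ (j + 3)) = x ^ 3 * (\<Sum>j<N. (real j + 3) * (2 * x) ^ j)"
    by (simp add: sum_distrib_left power_add power_mult_distrib mult_ac)
  also have "\<dots> \<le> x ^ 3 * (3 / (1 - 2 * x) + 2 * x / (1 - 2 * x)\<^sup>2)"
    using x by (intro mult_left_mono sum_linear_geometric_le) auto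
  also have "3 / (1 - 2 * x) + 2 * x / (1 - 2 * x)\<^sup>2 = (3 - 4 * x) / (1 - 2 * x)\<^sup>2"
  proof -
    have d: "1 - 2 * x \<noteq> 0"
      using x by simp
    have "3 / (1 - 2 * x) = 3 * (1 - 2 * x) / (1 - 2 * x)\<^sup>2"
      using d by (metis nonzero_mult_divide_mult_cancel_right power2_eq_square)
    moreover have "(3 * (1 - 2 * x) + 2 * x) / (1 - 2 * x)\<^sup>2 =
        3 * (1 - 2 * x) / (1 - 2 * x)\<^sup>2 + 2 * x / (1 - 2 * x)\<^sup>2"
      by (rule add_divide_distrib)
    ultimately show ?thesis
      by simp
  qed
  finally show ?thesis
    by simp
qed

text \<open>The base 5.610718614 is just above the growth rate of forest_count: it is chosen so that
  Y = 1.593329 satisfies the fixpoint condition of forest_series_le at z = 1 / 5.610718614.\<close>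
lemma forest_count_le: "real (forest_count n) \<le> 1.593329 * 5.610718614 ^ n"
proof -
  define q :: real where "q = 5.610718614"
  define Y :: real where "Y = 1.593329"
  have q: "0 < q" and Y: "1 \<le> Y" and x: "0 \<le> Y / q" "Y / q < 1 / 2"
    by (simp_all add: q_def Y_def)
  have "1 + (\<Sum>k\<in>{1..N}. real (ham_path_bound k) * (1 / q * Y) ^ k) \<le> Y" for N
  proof -
    have "1 + (\<Sum>k\<in>{1..N}. real (ham_path_bound k) * (Y / q) ^ k) \<le>
        1 + (Y / q + (Y / q)\<^sup>2 + (Y / q) ^ 3 * (3 - 4 * (Y / q)) / (1 - 2 * (Y / q))\<^sup>2)"
      using sum_ham_path_bound_le[OF x] by simp
    also have "\<dots> \<le> Y"
      by (simp add: q_def Y_def power_divide divide_simps)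
    finally show ?thesis
      by simp
  qed
  then have "(\<Sum>m\<le>n. real (forest_count m) * (1 / q) ^ m) \<le> Y"
    using forest_series_le[of "1 / q" Y] q Y by simp
  moreover have "real (forest_count n) * (1 / q) ^ n \<le> (\<Sum>m\<le>n. real (forest_count m) * (1 / q) ^ m)"
    using q by (intro member_le_sum) auto
  ultimately have "real (forest_count n) * (1 / q) ^ n \<le> Y"
    by linarith
  then have "real (forest_count n) \<le> Y * q ^ n"
    using q by (simp add: field_simps power_divide)
  then show ?thesis
    unfolding q_def Y_def .
qed

lemma cross_swap: "cross p r q = - cross p q r"
  unfolding cross_def by (simp add: algebra_simps)

lemma cross_rotate: "cross q r p = cross p q r"
  unfolding cross_def by (simp add: algebra_simps)

text \<open>The common point is found on both segments by interpolating linearly between the signed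
  areas of the endpoints.\<close>
lemma closed_segments_intersect:
  fixes p1 p2 p3 p4 :: pt
  assumes h1: "cross p1 p2 p3 * cross p1 p2 p4 < 0" and h2: "cross p3 p4 p1 * cross p3 p4 p2 < 0"
  shows "\<exists>x. x \<in> closed_segment p1 p2 \<and> x \<in> closed_segment p3 p4"
proof -
  obtain a1 b1 a2 b2 a3 b3 a4 b4 where p: "p1 = (a1, b1)" "p2 = (a2, b2)" "p3 = (a3, b3)" "p4 = (a4, b4)"
    by (cases p1, cases p2, cases p3, cases p4) auto
  define d1 where "d1 = cross p3 p4 p1"
  define d2 where "d2 = cross p3 p4 p2"
  define e3 where "e3 = cross p1 p2 p3"
  define e4 where "e4 = cross p1 p2 p4"
  have dd: "(0 < d1 \<and> d2 < 0) \<or> (d1 < 0 \<and> 0 < d2)"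
    using h2 unfolding d1_def d2_def by (simp add: mult_less_0_iff)
  have ee: "(0 < e3 \<and> e4 < 0) \<or> (e3 < 0 \<and> 0 < e4)"
    using h1 unfolding e3_def e4_def by (simp add: mult_less_0_iff)
  have dne: "d1 - d2 \<noteq> 0" and ene: "e3 - e4 \<noteq> 0"
    using dd ee by auto
  define t where "t = d1 / (d1 - d2)"
  define s where "s = e3 / (e3 - e4)"
  have t01: "0 \<le> t" "t \<le> 1" and s01: "0 \<le> s" "s \<le> 1"
    using dd ee unfolding t_def s_def by (auto simp: divide_simps)
  define X where "X = (1 - t) *\<^sub>R p1 + t *\<^sub>R p2"
  define Y where "Y = (1 - s) *\<^sub>R p3 + s *\<^sub>R p4"
  have X: "X \<in> closed_segment p1 p2" and Y: "Y \<in> closed_segment p3 p4"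
    unfolding X_def Y_def closed_segment_def using t01 s01 by blast+
  have id1: "(a2 * d1 - a1 * d2) * (e3 - e4) = (a4 * e3 - a3 * e4) * (d1 - d2)"
    and id2: "(b2 * d1 - b1 * d2) * (e3 - e4) = (b4 * e3 - b3 * e4) * (d1 - d2)"
    unfolding d1_def d2_def e3_def e4_def p cross_def by (simp_all add: algebra_simps)
  have t1: "1 - t = - d2 / (d1 - d2)" and s1: "1 - s = - e4 / (e3 - e4)"
    unfolding t_def s_def using dne ene by (simp_all add: field_simps)
  have comb: "(- v / dd) * x + (u / dd) * y = (y * u - x * v) / dd" if "dd \<noteq> 0" for x y u v dd :: real
    using that by (simp add: field_simps)
  have "fst X = (1 - t) * a1 + t * a2" "snd X = (1 - t) * b1 + t * b2"
    unfolding X_def p by simp_all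
  then have fX: "fst X = (a2 * d1 - a1 * d2) / (d1 - d2)" "snd X = (b2 * d1 - b1 * d2) / (d1 - d2)"
    unfolding t1 unfolding t_def using comb[OF dne] by simp_all
  have "fst Y = (1 - s) * a3 + s * a4" "snd Y = (1 - s) * b3 + s * b4"
    unfolding Y_def p by simp_all
  then have fY: "fst Y = (a4 * e3 - a3 * e4) / (e3 - e4)" "snd Y = (b4 * e3 - b3 * e4) / (e3 - e4)"
    unfolding s1 unfolding s_def using comb[OF ene] by simp_all
  have "X = Y"
    using dne ene id1 id2 by (simp add: prod_eq_iff fX fY divide_simps)
  then show ?thesis
    using X Y by blast
qed

lemma sorted_enumeration:
  fixes X :: "('a::linorder \<times> 'b) set"
  assumes "finite X" "inj_on fst X"
  obtains u where "bij_betw u {..<card X} X" "\<And>i j. i < j \<Longrightarrow> j < card X \<Longrightarrow> fst (u i) < fst (u j)"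
proof -
  define xs where "xs = sorted_list_of_set (fst ` X)"
  have len: "length xs = card X"
    unfolding xs_def using card_image[OF assms(2)] by simp
  have "bij_betw ((!) xs) {..<card X} (fst ` X)"
    by (rule bij_betw_nth) (simp_all add: xs_def len[symmetric] assms(1))
  moreover have "bij_betw (inv_into X fst) (fst ` X) X"
    by (rule bij_betw_inv_into[OF inj_on_imp_bij_betw[OF assms(2)]])
  ultimately have bij: "bij_betw (inv_into X fst \<circ> (!) xs) {..<card X} X"
    by (rule bij_betw_trans)
  have "fst ((inv_into X fst \<circ> (!) xs) i) = xs ! i" if "i < card X" for i
  proof -
    have "xs ! i \<in> fst ` X"
      using that len nth_mem[of i xs] assms(1) by (simp add: xs_def)
    then show ?thesis
      by (simp add: f_inv_into_f)
  qed
  moreover have "xs ! i < xs ! j" if "i < j" "j < card X" for i j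
    using that len sorted_wrt_nth_less[OF strict_sorted_list_of_set[of "fst ` X"]]
    by (simp add: xs_def)
  ultimately show ?thesis
    using that[OF bij] by (metis order.strict_trans)
qed

definition convex_sequence :: "(nat \<Rightarrow> pt) \<Rightarrow> nat \<Rightarrow> bool" where
  "convex_sequence u n \<longleftrightarrow>
     (\<forall>a b c. a < b \<and> b < c \<and> c < n \<longrightarrow> cross (u a) (u c) (u b) < 0) \<or>
     (\<forall>a b c. a < b \<and> b < c \<and> c < n \<longrightarrow> cross (u a) (u c) (u b) > 0)"

lemma chain_convex_sequence:
  assumes "convex_chain X \<or> concave_chain X"
  obtains u where "bij_betw u {..<card X} X" "convex_sequence u (card X)"
proof -
  have "finite X" "inj_on fst X"
    using assms by (auto simp: convex_chain_def concave_chain_def)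
  then obtain u where u: "bij_betw u {..<card X} X"
    and mono: "\<And>i j. i < j \<Longrightarrow> j < card X \<Longrightarrow> fst (u i) < fst (u j)"
    using sorted_enumeration by blast
  have mem: "u i \<in> X" if "i < card X" for i
    using u that by (auto dest: bij_betwE)
  have "convex_sequence u (card X)"
    using assms unfolding convex_sequence_def convex_chain_def concave_chain_def
      strictly_below_def strictly_above_def
    by (smt (verit, best) mem mono order.strict_trans)
  with u that show ?thesis
    by blast
qed

lemma convex_sequence_chords_intersect:
  assumes ch: "convex_sequence u n" and abcd: "a < c" "c < b" "b < d" "d < n"
  shows "\<exists>x. x \<in> closed_segment (u a) (u b) \<and> x \<in> closed_segment (u c) (u d)"
proof (rule closed_segments_intersect)
  have e1: "cross (u a) (u b) (u d) = - cross (u a) (u d) (u b)"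
    by (rule cross_swap)
  have e2: "cross (u c) (u d) (u a) = - cross (u a) (u d) (u c)"
    using cross_rotate[of "u c" "u d" "u a"] cross_swap[of "u a" "u d" "u c"] by simp
  from ch consider
      (neg) "\<forall>a b c. a < b \<and> b < c \<and> c < n \<longrightarrow> cross (u a) (u c) (u b) < 0"
    | (pos) "\<forall>a b c. a < b \<and> b < c \<and> c < n \<longrightarrow> cross (u a) (u c) (u b) > 0"
    unfolding convex_sequence_def by blast
  then have "cross (u a) (u b) (u c) * cross (u a) (u b) (u d) < 0 \<and>
      cross (u c) (u d) (u a) * cross (u c) (u d) (u b) < 0"
  proof cases
    case neg
    then have "cross (u a) (u b) (u c) < 0" "cross (u a) (u d) (u b) < 0"
      "cross (u c) (u d) (u b) < 0" "cross (u a) (u d) (u c) < 0"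
      using abcd by auto
    then show ?thesis
      using e1 e2 by (simp add: mult_neg_neg mult_pos_pos)
  next
    case pos
    then have "cross (u a) (u b) (u c) > 0" "cross (u a) (u d) (u b) > 0"
      "cross (u c) (u d) (u b) > 0" "cross (u a) (u d) (u c) > 0"
      using abcd by auto
    then show ?thesis
      using e1 e2 by (simp add: mult_neg_neg mult_pos_pos)
  qed
  then show "cross (u a) (u b) (u c) * cross (u a) (u b) (u d) < 0"
    "cross (u c) (u d) (u a) * cross (u c) (u d) (u b) < 0"
    by auto
qed

lemma double_chain_bridges_intersect:
  assumes dc: "double_chain U L" and x: "x \<in> U" "x' \<in> U" and y: "y \<in> L" "y' \<in> L"
    and f: "fst x < fst x'" "fst y' < fst y"
  shows "\<exists>p. p \<in> closed_segment x y \<and> p \<in> closed_segment x' y'"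
proof (rule closed_segments_intersect)
  have U: "\<forall>p\<in>U. \<forall>q\<in>U. p \<noteq> q \<longrightarrow> (\<forall>l\<in>L. strictly_below p q l)"
    and L: "\<forall>p\<in>L. \<forall>q\<in>L. p \<noteq> q \<longrightarrow> (\<forall>u\<in>U. strictly_above p q u)"
    using dc unfolding double_chain_def by blast+
  have "x \<noteq> x'" "y' \<noteq> y"
    using f by auto
  then have "strictly_below x x' y" "strictly_below x x' y'" "strictly_above y' y x" "strictly_above y' y x'"
    using U L x y by blast+
  then have c: "cross x x' y < 0" "cross x x' y' < 0" "cross y' y x > 0" "cross y' y x' > 0"
    using f unfolding strictly_below_def strictly_above_def by auto
  have "cross x y x' = - cross x x' y" "cross x y y' = - cross y' y x"
    using cross_swap[of x y x'] cross_swap[of x y y'] cross_rotate[of y' y x] by simp_all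
  then show "cross x y x' * cross x y y' < 0"
    using c by (simp add: mult_neg_pos)
  have "cross x' y' x = cross x x' y'" "cross x' y' y = cross y' y x'"
    by (rule cross_rotate, rule cross_rotate[symmetric])
  then show "cross x' y' x * cross x' y' y < 0"
    using c by (simp add: mult_neg_pos)
qed

lemma polygonizationE:
  assumes "polygonization P E"
  obtains vs where "distinct vs" "set vs = P" "3 \<le> length vs" "E = cycle_edges vs"
  using assms unfolding polygonization_def by blast

lemma polygonization_disjoint_edges:
  assumes "polygonization P E" "e \<in> E" "f \<in> E" "e \<inter> f = {}"
    "a \<in> e" "b \<in> e" "c \<in> f" "d \<in> f"
  shows "closed_segment a b \<inter> closed_segment c d = {}"
proof -
  have "e \<noteq> f"
    using assms(4,5) by auto
  then have "(\<Union>a\<in>e. \<Union>b\<in>e. closed_segment a b) \<inter> (\<Union>a\<in>f. \<Union>b\<in>f. closed_segment a b) \<subseteq> e \<inter> f"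
    using assms(1-3) unfolding polygonization_def by blast
  then show ?thesis
    using assms(4-8) by blast
qed

lemma cycle_edges_conv_path_edges:
  assumes "vs \<noteq> []"
  shows "cycle_edges vs = insert {last vs, hd vs} (path_edges vs)"
proof -
  let ?k = "length vs"
  have last: "last vs = vs ! (?k - 1)" and hd: "hd vs = vs ! 0"
    using assms by (simp_all add: last_conv_nth hd_conv_nth)
  have "{vs ! i, vs ! ((i + 1) mod ?k)} \<in> insert {last vs, hd vs} (path_edges vs)" if "i < ?k" for i
  proof (cases "Suc i < ?k")
    case False
    then have "Suc i = ?k"
      using that by simp
    then have "i = ?k - 1" "(i + 1) mod ?k = 0"
      by auto
    then show ?thesis
      by (simp add: last hd)
  qed (simp add: path_edges_nth)
  moreover have "{last vs, hd vs} \<in> cycle_edges vs"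
    unfolding cycle_edges_def last hd using assms
    by (intro CollectI exI[of _ "?k - 1"]) (simp add: Suc_diff_1)
  moreover have "e \<in> cycle_edges vs" if "e \<in> path_edges vs" for e
    using that unfolding cycle_edges_def path_edges_conv_nth
    by (force intro: exI[of _ "_ :: nat"])
  ultimately show ?thesis
    unfolding cycle_edges_def by blast
qed

lemma cycle_edges_rotate_subset: "cycle_edges (rotate m vs) \<subseteq> cycle_edges vs"
proof
  fix e assume "e \<in> cycle_edges (rotate m vs)"
  then obtain i where i: "i < length vs" "e = {rotate m vs ! i, rotate m vs ! ((i + 1) mod length vs)}"
    unfolding cycle_edges_def by auto
  let ?k = "length vs"
  have k: "0 < ?k"
    using i(1) by arith
  have "rotate m vs ! i = vs ! ((i + m) mod ?k)"
    using i by (simp add: nth_rotate add.commute)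
  moreover have "rotate m vs ! ((i + 1) mod ?k) = vs ! (((i + 1) mod ?k + m) mod ?k)"
    using k by (simp add: nth_rotate add.commute)
  moreover have "((i + 1) mod ?k + m) mod ?k = ((i + m) mod ?k + 1) mod ?k"
    by (simp add: mod_simps)
  ultimately have "e = {vs ! ((i + m) mod ?k), vs ! (((i + m) mod ?k + 1) mod ?k)}"
    using i by simp
  moreover have "(i + m) mod ?k < ?k"
    using k by simp
  ultimately show "e \<in> cycle_edges vs"
    unfolding cycle_edges_def by blast
qed

lemma cycle_edges_rotate: "cycle_edges (rotate m vs) = cycle_edges vs"
proof
  show "cycle_edges vs \<subseteq> cycle_edges (rotate m vs)"
  proof (cases "vs = []")
    case False
    let ?k = "length vs"
    have "(?k - m mod ?k + m) mod ?k = (?k - m mod ?k + m mod ?k) mod ?k"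
      by (simp add: mod_simps)
    also have "?k - m mod ?k + m mod ?k = ?k"
      using False by (simp add: less_imp_le)
    finally have "rotate (?k - m mod ?k) (rotate m vs) = vs"
      by (simp add: rotate_rotate rotate_id)
    then show ?thesis
      using cycle_edges_rotate_subset[of "?k - m mod ?k" "rotate m vs"] by simp
  qed simp
qed (rule cycle_edges_rotate_subset)

lemma three_le_length_ConsE:
  assumes "3 \<le> length xs"
  obtains a b c rest where "xs = a # b # c # rest"
  using assms that by (auto simp: numeral_3_eq_3 Suc_le_length_iff)

lemma closing_edge_not_path_edge:
  assumes "distinct ws" "3 \<le> length ws"
  shows "{last ws, hd ws} \<notin> path_edges ws"
proof
  assume "{last ws, hd ws} \<in> path_edges ws"
  then obtain i where i: "Suc i < length ws" "{last ws, hd ws} = {ws ! i, ws ! Suc i}"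
    unfolding path_edges_conv_nth by blast
  have "ws \<noteq> []"
    using assms(2) by auto
  then have "{ws ! (length ws - 1), ws ! 0} = {ws ! i, ws ! Suc i}"
    using i(2) by (simp add: last_conv_nth hd_conv_nth)
  then consider "ws ! (length ws - 1) = ws ! i" | "ws ! 0 = ws ! i" "ws ! (length ws - 1) = ws ! Suc i"
    by (auto simp: doubleton_eq_iff)
  then show False
  proof cases
    case 1
    then have "length ws - 1 = i"
      using assms(1) i(1) by (simp add: nth_eq_iff_index_eq)
    with i(1) show False
      by simp
  next
    case 2
    then have "0 = i" "length ws - 1 = Suc i"
      using assms(1) i(1) \<open>ws \<noteq> []\<close> nth_eq_iff_index_eq[of ws 0 i]
        nth_eq_iff_index_eq[of ws "length ws - 1" "Suc i"]
      by simp_all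
    with assms(2) show False
      by simp
  qed
qed

lemma polygonization_vertex_first:
  assumes "polygonization P E" "v \<in> P"
  obtains ws where "distinct ws" "set ws = P" "3 \<le> length ws" "hd ws = v"
    "E = insert {last ws, v} (path_edges ws)"
proof -
  obtain vs where vs: "distinct vs" "set vs = P" "3 \<le> length vs" "E = cycle_edges vs"
    using assms(1) by (rule polygonizationE)
  obtain j where j: "j < length vs" "vs ! j = v"
    using assms(2) vs(2) by (metis in_set_conv_nth)
  define ws where "ws = rotate j vs"
  have "vs \<noteq> []"
    using vs(3) by auto
  then have "hd ws = v" "ws \<noteq> []"
    using j by (simp_all add: ws_def hd_rotate_conv_nth)
  moreover have "distinct ws" "set ws = P" "3 \<le> length ws" "E = cycle_edges ws"
    using vs by (simp_all add: ws_def cycle_edges_rotate)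
  ultimately show ?thesis
    using that cycle_edges_conv_path_edges by metis
qed

lemma polygonization_closing_edge:
  assumes "polygonization P E" "e \<in> E"
  obtains ws where "distinct ws" "set ws = P" "3 \<le> length ws" "e = {last ws, hd ws}"
    "E = insert e (path_edges ws)"
proof -
  obtain vs where vs: "distinct vs" "set vs = P" "3 \<le> length vs" "E = cycle_edges vs"
    using assms(1) by (rule polygonizationE)
  let ?k = "length vs"
  obtain j where j: "j < ?k" "e = {vs ! j, vs ! ((j + 1) mod ?k)}"
    using assms(2) vs(4) unfolding cycle_edges_def by blast
  define ws where "ws = rotate (Suc j) vs"
  have ws: "distinct ws" "set ws = P" "length ws = ?k" "cycle_edges ws = E"
    unfolding ws_def using vs cycle_edges_rotate[of "Suc j" vs] by (simp_all del: rotate_Suc)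
  have k: "0 < ?k"
    using vs(3) by arith
  have "hd ws = vs ! ((j + 1) mod ?k)"
    unfolding ws_def using nth_rotate[of 0 vs "Suc j"] k by (simp add: hd_conv_nth del: rotate_Suc)
  moreover have "(?k - 1 + Suc j) mod ?k = j"
    using j(1) k by (simp add: Suc_diff_1)
  then have "last ws = vs ! j"
    unfolding ws_def using nth_rotate[of "?k - 1" vs "Suc j"] k
    by (simp add: last_conv_nth del: rotate_Suc)
  ultimately have e: "e = {last ws, hd ws}"
    using j(2) by (simp add: insert_commute)
  moreover have "ws \<noteq> []"
    using k ws(3) by auto
  ultimately show ?thesis
    using that ws vs(3) cycle_edges_conv_path_edges by metis
qed

lemma polygonization_edge:
  assumes "polygonization P E" "e \<in> E"
  obtains x y where "x \<noteq> y" "x \<in> P" "y \<in> P" "e = {x, y}"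
proof -
  obtain ws where ws: "distinct ws" "set ws = P" "3 \<le> length ws" "e = {last ws, hd ws}"
    using assms by (rule polygonization_closing_edge)
  obtain a b c rest where ws_eq: "ws = a # b # c # rest"
    using ws(3) by (rule three_le_length_ConsE)
  then have "last ws \<noteq> hd ws" "last ws \<in> P" "hd ws \<in> P"
    using ws(1,2) last_in_set[of "c # rest"] by auto
  then show ?thesis
    by (rule that[OF _ _ _ ws(4)])
qed

lemma polygonization_subset_Pow: "polygonization P E \<Longrightarrow> E \<subseteq> Pow P"
  using polygonization_edge by blast

lemma finite_polygonization:
  assumes "polygonization P E"
  shows "finite E"
proof -
  obtain vs where "3 \<le> length vs" "E = cycle_edges vs"
    using assms by (rule polygonizationE)
  moreover have "vs \<noteq> []"
    using calculation(1) by auto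
  ultimately show ?thesis
    using cycle_edges_conv_path_edges[of vs] by simp
qed

lemma polygonization_degree:
  assumes "polygonization P E" "v \<in> P"
  shows "card {e \<in> E. v \<in> e} = 2"
proof -
  obtain ws where ws: "distinct ws" "set ws = P" "3 \<le> length ws" "hd ws = v"
    and E: "E = insert {last ws, v} (path_edges ws)"
    using assms by (rule polygonization_vertex_first)
  obtain a w c rest where "ws = a # w # c # rest"
    using ws(3) by (rule three_le_length_ConsE)
  with ws(4) have ws_eq: "ws = v # w # c # rest"
    by simp
  have last: "last ws \<in> set (c # rest)"
    using ws_eq last_in_set[of "c # rest"] by simp
  have "distinct (v # w # c # rest)"
    using ws(1) ws_eq by simp
  then have "v \<notin> set (w # c # rest)" "w \<notin> set (c # rest)"
    by simp_all
  then have "v \<notin> e" if "e \<in> path_edges (w # c # rest)" for e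
    using path_edges_subset[OF that] by blast
  moreover have "E = insert {last ws, v} (insert {v, w} (path_edges (w # c # rest)))"
    using E ws_eq by simp
  ultimately have edges: "{e \<in> E. v \<in> e} = {{last ws, v}, {v, w}}"
    by auto
  have "last ws \<noteq> w" "v \<noteq> w"
    using last \<open>w \<notin> set (c # rest)\<close> \<open>v \<notin> set (w # c # rest)\<close> by auto
  then have "{last ws, v} \<noteq> {v, w}"
    by (auto simp: doubleton_eq_iff)
  then show ?thesis
    by (simp add: edges)
qed

text \<open>The path is cut into its maximal runs inside X; the extra invariant, that the first run
  starts with the first vertex, carries the induction.\<close>
lemma path_edges_restrict:
  assumes "distinct ws"
  obtains Rs where "path_cover Rs (set ws \<inter> X)" "cover_edges Rs = {e \<in> path_edges ws. e \<subseteq> X}"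
proof -
  have "\<exists>Rs. path_cover Rs (set ws \<inter> X) \<and> cover_edges Rs = {e \<in> path_edges ws. e \<subseteq> X} \<and>
      (ws \<noteq> [] \<longrightarrow> hd ws \<in> X \<longrightarrow> (\<exists>r Rs'. Rs = r # Rs' \<and> r \<noteq> [] \<and> hd r = hd ws))"
    using assms
  proof (induction ws)
    case Nil
    then show ?case
      by (intro exI[of _ "[]"]) (simp add: path_cover_def)
  next
    case (Cons x ws)
    then obtain Rs where Rs: "path_cover Rs (set ws \<inter> X)"
      "cover_edges Rs = {e \<in> path_edges ws. e \<subseteq> X}"
      "ws \<noteq> [] \<longrightarrow> hd ws \<in> X \<longrightarrow> (\<exists>r Rs'. Rs = r # Rs' \<and> r \<noteq> [] \<and> hd r = hd ws)"
      by auto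
    have x: "x \<notin> set ws"
      using Cons.prems by simp
    have edges: "{e \<in> path_edges (x # ws). e \<subseteq> X} =
        (if ws \<noteq> [] \<and> x \<in> X \<and> hd ws \<in> X then insert {x, hd ws} {e \<in> path_edges ws. e \<subseteq> X}
         else {e \<in> path_edges ws. e \<subseteq> X})"
      by (cases ws) auto
    consider "x \<notin> X" | "x \<in> X" "\<not> (ws \<noteq> [] \<and> hd ws \<in> X)" | "x \<in> X" "ws \<noteq> []" "hd ws \<in> X"
      by blast
    then show ?case
    proof cases
      case 1
      then show ?thesis
        using Rs(1,2) edges by (intro exI[of _ Rs]) auto
    next
      case 2
      then show ?thesis
        using Rs(1,2) edges x by (intro exI[of _ "[x] # Rs"]) (auto simp: path_cover_def)
    next
      case 3
      then obtain r Rs' where r: "Rs = r # Rs'" "r \<noteq> []" "hd r = hd ws"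
        using Rs(3) by blast
      then have "path_edges (x # r) = insert {x, hd ws} (path_edges r)"
        by (simp add: path_edges_Cons)
      then show ?thesis
        using Rs(1,2) edges x r 3 by (intro exI[of _ "(x # r) # Rs'"]) (auto simp: path_cover_def)
    qed
  qed
  then obtain Rs where "path_cover Rs (set ws \<inter> X) \<and> cover_edges Rs = {e \<in> path_edges ws. e \<subseteq> X} \<and>
      (ws \<noteq> [] \<longrightarrow> hd ws \<in> X \<longrightarrow> (\<exists>r Rs'. Rs = r # Rs' \<and> r \<noteq> [] \<and> hd r = hd ws))" ..
  then have "path_cover Rs (set ws \<inter> X)" "cover_edges Rs = {e \<in> path_edges ws. e \<subseteq> X}"
    by simp_all
  then show ?thesis
    by (rule that)
qed

lemma polygonization_convex_sequence_noncrossing: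
  assumes poly: "polygonization P E" and u: "bij_betw u {..<n} X" "convex_sequence u n"
    and abcd: "a < c" "c < b" "b < d" "d < n" and E: "{u a, u b} \<in> E" "{u c, u d} \<in> E"
  shows False
proof -
  obtain x where x: "x \<in> closed_segment (u a) (u b)" "x \<in> closed_segment (u c) (u d)"
    using convex_sequence_chords_intersect[OF u(2) abcd] by blast
  have "inj_on u {..<n}"
    using u(1) by (simp add: bij_betw_def)
  then have "u a \<noteq> u c" "u a \<noteq> u d" "u b \<noteq> u c" "u b \<noteq> u d"
    using abcd by (auto dest: inj_onD)
  then have "{u a, u b} \<inter> {u c, u d} = {}"
    by auto
  then show False
    using polygonization_disjoint_edges[OF poly E] x by blast
qed

lemma noncrossing_inv_into_image:
  assumes u: "bij_betw u {..<n} X" and G: "G \<subseteq> Pow X"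
    and nc: "\<And>a b c d. a < c \<Longrightarrow> c < b \<Longrightarrow> b < d \<Longrightarrow> d < n \<Longrightarrow>
      {u a, u b} \<in> G \<Longrightarrow> {u c, u d} \<in> G \<Longrightarrow> False"
  shows "noncrossing ((`) (inv_into {..<n} u) ` G)"
  unfolding noncrossing_def
proof clarify
  let ?i = "inv_into {..<n} u"
  fix a b c d e f
  assume abcd: "a < c" "c < b" "b < d" and e: "{a, b} = ?i ` e" "e \<in> G"
    and f: "{c, d} = ?i ` f" "f \<in> G"
  have inv: "u (?i x) = x" if "x \<in> X" for x
    using u that by (auto simp: bij_betw_def f_inv_into_f)
  have image_inv: "u ` ?i ` g = g" if "g \<subseteq> X" for g
  proof -
    have "u ` ?i ` g = (\<lambda>x. u (?i x)) ` g"
      by (simp add: image_image)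
    also have "\<dots> = (\<lambda>x. x) ` g"
      using that inv by (intro image_cong) auto
    finally show ?thesis
      by simp
  qed
  have X: "e \<subseteq> X" "f \<subseteq> X"
    using e(2) f(2) G by auto
  have "e = u ` {a, b}" "f = u ` {c, d}"
    using image_inv[OF X(1)] image_inv[OF X(2)] e(1) f(1) by simp_all
  moreover have "d \<in> ?i ` f"
    by (simp add: f(1)[symmetric])
  moreover have "?i ` X = {..<n}"
    using bij_betw_inv_into[OF u] by (simp add: bij_betw_def)
  ultimately have "e = {u a, u b}" "f = {u c, u d}" "d < n"
    using X(2) by auto
  then show False
    using nc[OF abcd] e(2) f(2) by blast
qed

lemma polygonization_chain_forest:
  assumes poly: "polygonization P E" and u: "bij_betw u {..<n} X" "convex_sequence u n"
    and ws: "distinct ws" "X \<subseteq> set ws" and G: "G = {e \<in> path_edges ws. e \<subseteq> X}" "G \<subseteq> E"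
  shows "(`) (inv_into {..<n} u) ` G \<in> noncrossing_forests {..<n}"
proof -
  let ?i = "inv_into {..<n} u"
  obtain Rs where Rs: "path_cover Rs (set ws \<inter> X)" "cover_edges Rs = G"
    using path_edges_restrict[OF ws(1)] G(1) by blast
  have "set ws \<inter> X = X"
    using ws(2) by blast
  then have cover: "path_cover Rs X"
    using Rs(1) by simp
  have "bij_betw ?i X {..<n}"
    using u(1) by (rule bij_betw_inv_into)
  then have inj: "inj_on ?i X" and img: "?i ` X = {..<n}"
    by (simp_all add: bij_betw_def)
  have "path_cover (map (map ?i) Rs) {..<n}"
    using path_cover_map(1)[OF cover inj] img by simp
  moreover have "cover_edges (map (map ?i) Rs) = (`) ?i ` G"
    using path_cover_map(2)[OF cover inj] Rs(2) by simp
  moreover have "noncrossing ((`) ?i ` G)"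
  proof (rule noncrossing_inv_into_image[OF u(1)])
    show "G \<subseteq> Pow X"
      using G(1) by auto
    fix a b c d
    assume "a < c" "c < b" "b < d" "d < n" "{u a, u b} \<in> G" "{u c, u d} \<in> G"
    then show False
      using polygonization_convex_sequence_noncrossing[OF poly u, of a c b d] G(2) by blast
  qed
  ultimately show ?thesis
    unfolding noncrossing_forests_def by (intro CollectI exI[of _ "map (map ?i) Rs"]) simp
qed

lemma polygonization_restrict_forest:
  assumes poly: "polygonization P E" and X: "X \<subseteq> P" "v \<in> P" "v \<notin> X"
    and u: "bij_betw u {..<n} X" "convex_sequence u n"
  shows "(`) (inv_into {..<n} u) ` {e \<in> E. e \<subseteq> X} \<in> noncrossing_forests {..<n}"
proof -
  obtain ws where ws: "distinct ws" "set ws = P" "E = insert {last ws, v} (path_edges ws)"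
    using poly X(2) by (rule polygonization_vertex_first)
  then have "{e \<in> E. e \<subseteq> X} = {e \<in> path_edges ws. e \<subseteq> X}"
    using X(3) by auto
  then show ?thesis
    using polygonization_chain_forest[OF poly u ws(1)] X(1) ws(2) by auto
qed

lemma polygonization_delete_edge_forest:
  assumes poly: "polygonization X E" and e: "e \<in> E"
    and u: "bij_betw u {..<n} X" "convex_sequence u n"
  shows "(`) (inv_into {..<n} u) ` (E - {e}) \<in> noncrossing_forests {..<n}"
proof -
  obtain ws where ws: "distinct ws" "set ws = X" "3 \<le> length ws" "e = {last ws, hd ws}"
    and E: "E = insert e (path_edges ws)"
    using poly e by (rule polygonization_closing_edge)
  then have "E - {e} = {f \<in> path_edges ws. f \<subseteq> X}"
    using closing_edge_not_path_edge[OF ws(1,3)] path_edges_subset by auto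
  then show ?thesis
    using polygonization_chain_forest[OF poly u ws(1)] ws(2) by auto
qed

definition bridges :: "pt set \<Rightarrow> pt set \<Rightarrow> pt set set \<Rightarrow> pt set set" where
  "bridges U L E = {e \<in> E. \<not> e \<subseteq> U \<and> \<not> e \<subseteq> L}"

definition noncrossing_bridges :: "pt set \<Rightarrow> pt set \<Rightarrow> pt set set \<Rightarrow> bool" where
  "noncrossing_bridges U L B \<longleftrightarrow> (\<forall>e\<in>B. \<exists>x\<in>U. \<exists>y\<in>L. e = {x, y}) \<and>
     (\<forall>x\<in>U. \<forall>x'\<in>U. \<forall>y\<in>L. \<forall>y'\<in>L. {x, y} \<in> B \<longrightarrow> {x', y'} \<in> B \<longrightarrow> fst x < fst x' \<longrightarrow> fst y \<le> fst y')"

lemma noncrossing_bridges_ends: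
  "noncrossing_bridges U L B \<Longrightarrow> e \<in> B \<Longrightarrow> \<exists>x\<in>U. \<exists>y\<in>L. e = {x, y}"
  unfolding noncrossing_bridges_def by simp

lemma noncrossing_bridges_order:
  "noncrossing_bridges U L B \<Longrightarrow> x \<in> U \<Longrightarrow> x' \<in> U \<Longrightarrow> y \<in> L \<Longrightarrow> y' \<in> L \<Longrightarrow>
    {x, y} \<in> B \<Longrightarrow> {x', y'} \<in> B \<Longrightarrow> fst x < fst x' \<Longrightarrow> fst y \<le> fst y'"
  unfolding noncrossing_bridges_def by simp

lemma noncrossing_bridges_subset:
  assumes "noncrossing_bridges U L B" "B' \<subseteq> B"
  shows "noncrossing_bridges U L B'"
proof -
  have "\<forall>e\<in>B'. \<exists>x\<in>U. \<exists>y\<in>L. e = {x, y}"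
    using assms unfolding noncrossing_bridges_def by (simp add: subset_iff)
  moreover have "\<forall>x\<in>U. \<forall>x'\<in>U. \<forall>y\<in>L. \<forall>y'\<in>L.
      {x, y} \<in> B' \<longrightarrow> {x', y'} \<in> B' \<longrightarrow> fst x < fst x' \<longrightarrow> fst y \<le> fst y'"
    using assms unfolding noncrossing_bridges_def by (simp add: subset_iff)
  ultimately show ?thesis
    unfolding noncrossing_bridges_def by (rule conjI)
qed

lemma noncrossing_bridges_leftmost:
  assumes B: "noncrossing_bridges U L B" and UL: "U \<inter> L = {}" "inj_on fst U" "inj_on fst L"
    and x0: "x0 \<in> U" "\<exists>e\<in>B. x0 \<in> e" "\<And>x. x \<in> U \<Longrightarrow> \<exists>e\<in>B. x \<in> e \<Longrightarrow> fst x0 \<le> fst x"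
    and y0: "y0 \<in> L" "\<exists>e\<in>B. y0 \<in> e" "\<And>y. y \<in> L \<Longrightarrow> \<exists>e\<in>B. y \<in> e \<Longrightarrow> fst y0 \<le> fst y"
  shows "{x0, y0} \<in> B"
proof (rule ccontr)
  assume not_in: "{x0, y0} \<notin> B"
  note ends = noncrossing_bridges_ends[OF B]
  obtain e1 x y1 where "e1 \<in> B" "x0 \<in> e1" "x \<in> U" "y1 \<in> L" "e1 = {x, y1}"
    using x0(2) ends by blast
  then have y1: "y1 \<in> L" "{x0, y1} \<in> B"
    using x0(1) UL(1) by auto
  obtain e2 x2 y where "e2 \<in> B" "y0 \<in> e2" "x2 \<in> U" "y \<in> L" "e2 = {x2, y}"
    using y0(2) ends by blast
  then have x2: "x2 \<in> U" "{x2, y0} \<in> B"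
    using y0(1) UL(1) by auto
  have "y1 \<noteq> y0" "x2 \<noteq> x0"
    using not_in y1(2) x2(2) by auto
  moreover have "fst y0 \<le> fst y1" "fst x0 \<le> fst x2"
    using x0(3)[OF x2(1)] y0(3)[OF y1(1)] x2(2) y1(2) by blast+
  ultimately have "fst y0 < fst y1" "fst x0 < fst x2"
    using UL(2,3) x0(1) x2(1) y0(1) y1(1) by (auto simp: inj_on_eq_iff order.order_iff_strict)
  moreover have "fst y1 \<le> fst y0"
    using noncrossing_bridges_order[OF B x0(1) x2(1) y1(1) y0(1) y1(2) x2(2)] calculation(2) .
  ultimately show False
    by simp
qed

lemma card_incident_Diff:
  assumes "finite B" "e0 \<in> B"
  shows "card {e \<in> B - {e0}. v \<in> e} = card {e \<in> B. v \<in> e} - (if v \<in> e0 then 1 else 0)"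
proof (cases "v \<in> e0")
  case True
  then have "{e \<in> B - {e0}. v \<in> e} = {e \<in> B. v \<in> e} - {e0}"
    by auto
  then show ?thesis
    using True assms by (simp add: card_Diff_singleton)
qed (auto intro: arg_cong[of _ _ card])

lemma leftmost_touched:
  fixes X :: "('a::linorder \<times> 'b) set"
  assumes "finite B" "\<forall>e\<in>B. finite e" "\<exists>e\<in>B. \<exists>x\<in>X. x \<in> e"
  obtains x0 where "x0 \<in> X" "\<exists>e\<in>B. x0 \<in> e" "\<And>x. x \<in> X \<Longrightarrow> \<exists>e\<in>B. x \<in> e \<Longrightarrow> fst x0 \<le> fst x"
proof -
  let ?T = "{x \<in> X. \<exists>e\<in>B. x \<in> e}"
  have "finite (\<Union> B)"
    using assms(1,2) by blast
  then have "finite ?T"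
    by (rule finite_subset[rotated]) blast
  moreover have "?T \<noteq> {}"
    using assms(3) by blast
  ultimately have min: "Min (fst ` ?T) \<in> fst ` ?T"
    and le: "\<And>x. x \<in> ?T \<Longrightarrow> Min (fst ` ?T) \<le> fst x"
    by simp_all
  obtain x0 where x0: "x0 \<in> ?T" "Min (fst ` ?T) = fst x0"
    using min by (rule imageE)
  show ?thesis
  proof (rule that)
    show "x0 \<in> X" "\<exists>e\<in>B. x0 \<in> e"
      using x0 by simp_all
    show "fst x0 \<le> fst x" if "x \<in> X" "\<exists>e\<in>B. x \<in> e" for x
      using le[of x] that x0(2) by simp
  qed
qed

lemma card_incident_pos_iff: "finite B \<Longrightarrow> 0 < card {e \<in> B. v \<in> e} \<longleftrightarrow> (\<exists>e\<in>B. v \<in> e)"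
  by (auto simp: card_gt_0_iff)

text \<open>Noncrossing bridges are determined by their vertex degrees: peel off the edge joining
  the leftmost touched vertices and induct.\<close>
lemma noncrossing_bridges_eq:
  assumes UL: "U \<inter> L = {}" "inj_on fst U" "inj_on fst L"
  shows "finite B1 \<Longrightarrow> finite B2 \<Longrightarrow> noncrossing_bridges U L B1 \<Longrightarrow> noncrossing_bridges U L B2 \<Longrightarrow>
    (\<And>v. card {e \<in> B1. v \<in> e} = card {e \<in> B2. v \<in> e}) \<Longrightarrow> B1 = B2"
proof (induction "card B1" arbitrary: B1 B2)
  case 0
  then have "B1 = {}"
    by simp
  show ?case
  proof (rule ccontr)
    assume "B1 \<noteq> B2"
    then obtain e where e: "e \<in> B2"
      using \<open>B1 = {}\<close> by auto
    then obtain x y where "e = {x, y}"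
      using noncrossing_bridges_ends[OF "0.prems"(4)] by blast
    then have "x \<in> e"
      by simp
    then have "0 < card {e \<in> B2. x \<in> e}"
      using e card_incident_pos_iff[OF "0.prems"(2), of x] by blast
    then show False
      using "0.prems"(5)[of x] \<open>B1 = {}\<close> by simp
  qed
next
  case (Suc N)
  have touched: "(\<exists>e\<in>B1. v \<in> e) \<longleftrightarrow> (\<exists>e\<in>B2. v \<in> e)" for v
    by (simp only: card_incident_pos_iff[OF Suc.prems(1), symmetric]
        card_incident_pos_iff[OF Suc.prems(2), symmetric] Suc.prems(5))
  have "B1 \<noteq> {}"
    using Suc.hyps(2) by auto
  then obtain e where e: "e \<in> B1"
    by blast
  then obtain x y where xy: "x \<in> U" "y \<in> L" "e = {x, y}"
    using noncrossing_bridges_ends[OF Suc.prems(3)] by blast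
  then have "x \<in> e" "y \<in> e"
    by simp_all
  then have touch: "\<exists>e\<in>B1. \<exists>x\<in>U. x \<in> e" "\<exists>e\<in>B1. \<exists>y\<in>L. y \<in> e"
    using e xy(1,2) by blast+
  have fin: "\<forall>e\<in>B1. finite e"
    using noncrossing_bridges_ends[OF Suc.prems(3)] by fastforce
  obtain x0 where x0: "x0 \<in> U" "\<exists>e\<in>B1. x0 \<in> e" "\<And>x. x \<in> U \<Longrightarrow> \<exists>e\<in>B1. x \<in> e \<Longrightarrow> fst x0 \<le> fst x"
    using leftmost_touched[OF Suc.prems(1) fin touch(1)] by blast
  obtain y0 where y0: "y0 \<in> L" "\<exists>e\<in>B1. y0 \<in> e" "\<And>y. y \<in> L \<Longrightarrow> \<exists>e\<in>B1. y \<in> e \<Longrightarrow> fst y0 \<le> fst y"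
    using leftmost_touched[OF Suc.prems(1) fin touch(2)] by blast
  let ?e = "{x0, y0}"
  have in1: "?e \<in> B1"
    using noncrossing_bridges_leftmost[OF Suc.prems(3) UL x0 y0] .
  have in2: "?e \<in> B2"
  proof (rule noncrossing_bridges_leftmost[OF Suc.prems(4) UL])
    show "x0 \<in> U" "\<exists>e\<in>B2. x0 \<in> e" "y0 \<in> L" "\<exists>e\<in>B2. y0 \<in> e"
      using x0(1,2) y0(1,2) touched[of x0] touched[of y0] by simp_all
    show "fst x0 \<le> fst x" if "x \<in> U" "\<exists>e\<in>B2. x \<in> e" for x
      using x0(3)[of x] that touched[of x] by simp
    show "fst y0 \<le> fst y" if "y \<in> L" "\<exists>e\<in>B2. y \<in> e" for y
      using y0(3)[of y] that touched[of y] by simp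
  qed
  have "B1 - {?e} = B2 - {?e}"
  proof (rule Suc.hyps(1))
    show "N = card (B1 - {?e})"
      using Suc.hyps(2) in1 Suc.prems(1) by simp
    show "noncrossing_bridges U L (B1 - {?e})"
      by (rule noncrossing_bridges_subset[OF Suc.prems(3) Diff_subset])
    show "noncrossing_bridges U L (B2 - {?e})"
      by (rule noncrossing_bridges_subset[OF Suc.prems(4) Diff_subset])
    show "card {e \<in> B1 - {?e}. v \<in> e} = card {e \<in> B2 - {?e}. v \<in> e}" for v
      using Suc.prems(5)[of v] card_incident_Diff[OF Suc.prems(1) in1] card_incident_Diff[OF Suc.prems(2) in2]
      by simp
  qed (use Suc.prems(1,2) in simp_all)
  then show ?case
    using in1 in2 by (metis insert_Diff)
qed

lemma double_chainD:
  assumes "double_chain U L"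
  shows "U \<inter> L = {}" "convex_chain U \<or> concave_chain U" "convex_chain L \<or> concave_chain L"
    "finite U" "finite L" "inj_on fst U" "inj_on fst L"
  using assms unfolding double_chain_def convex_chain_def concave_chain_def by blast+

lemma card_incident_split:
  assumes "finite E" "v \<in> U" "v \<notin> L"
  shows "card {e \<in> E. v \<in> e} =
    card {e \<in> {e \<in> E. e \<subseteq> U}. v \<in> e} + card {e \<in> {e \<in> E. \<not> e \<subseteq> U \<and> \<not> e \<subseteq> L}. v \<in> e}"
proof -
  have "{e \<in> E. v \<in> e} =
      {e \<in> {e \<in> E. e \<subseteq> U}. v \<in> e} \<union> {e \<in> {e \<in> E. \<not> e \<subseteq> U \<and> \<not> e \<subseteq> L}. v \<in> e}"
    using assms(2,3) by blast
  then show ?thesis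
    using assms(1) by (simp add: card_Un_disjoint disjoint_iff)
qed

lemma edges_partition: "E = {e \<in> E. e \<subseteq> U} \<union> {e \<in> E. e \<subseteq> L} \<union> {e \<in> E. \<not> e \<subseteq> U \<and> \<not> e \<subseteq> L}"
  by blast

lemma bridges_commute: "bridges U L E = bridges L U E"
  unfolding bridges_def by blast

lemma bridges_degree:
  assumes poly: "polygonization (U \<union> L) E" and UL: "U \<inter> L = {}" and v: "v \<in> U"
  shows "card {e \<in> bridges U L E. v \<in> e} = 2 - card {e \<in> {e \<in> E. e \<subseteq> U}. v \<in> e}"
proof -
  have "v \<notin> L"
    using UL v by blast
  then show ?thesis
    using card_incident_split[OF finite_polygonization[OF poly] v \<open>v \<notin> L\<close>]
      polygonization_degree[OF poly, of v] v
    unfolding bridges_def by simp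
qed

lemma double_chain_noncrossing_bridges:
  assumes dc: "double_chain U L" and poly: "polygonization (U \<union> L) E"
  shows "noncrossing_bridges U L (bridges U L E)"
  unfolding noncrossing_bridges_def
proof (intro conjI ballI impI)
  have UL: "U \<inter> L = {}"
    using dc by (rule double_chainD)
  fix e assume "e \<in> bridges U L E"
  then have e: "e \<in> E" "\<not> e \<subseteq> U" "\<not> e \<subseteq> L"
    by (simp_all add: bridges_def)
  obtain a b where ab: "a \<noteq> b" "a \<in> U \<union> L" "b \<in> U \<union> L" "e = {a, b}"
    using poly e(1) by (rule polygonization_edge)
  show "\<exists>x\<in>U. \<exists>y\<in>L. e = {x, y}"
  proof (cases "a \<in> U")
    case True
    then have "b \<in> L"
      using ab e(2) by auto
    with True ab(4) show ?thesis
      by blast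
  next
    case False
    then have "a \<in> L" "b \<in> U"
      using ab e(3) by auto
    with ab(4) show ?thesis
      by (metis insert_commute)
  qed
next
  fix x x' y y'
  assume xy: "x \<in> U" "x' \<in> U" "y \<in> L" "y' \<in> L" "{x, y} \<in> bridges U L E"
    "{x', y'} \<in> bridges U L E" "fst x < fst x'"
  show "fst y \<le> fst y'"
  proof (rule ccontr)
    assume "\<not> fst y \<le> fst y'"
    then obtain p where p: "p \<in> closed_segment x y" "p \<in> closed_segment x' y'"
      using double_chain_bridges_intersect[OF dc xy(1-4) xy(7)] by auto
    have "x \<noteq> x'" "y \<noteq> y'" "x \<noteq> y'" "y \<noteq> x'"
      using xy double_chainD(1)[OF dc] \<open>\<not> fst y \<le> fst y'\<close> by auto
    then have "{x, y} \<inter> {x', y'} = {}"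
      by auto
    moreover have "{x, y} \<in> E" "{x', y'} \<in> E"
      using xy(5,6) by (simp_all add: bridges_def)
    ultimately have "closed_segment x y \<inter> closed_segment x' y' = {}"
      using polygonization_disjoint_edges[OF poly] by simp
    with p show False
      by blast
  qed
qed

lemma polygonization_eqI:
  assumes dc: "double_chain U L" and E: "polygonization (U \<union> L) E1" "polygonization (U \<union> L) E2"
    and same_U: "{e \<in> E1. e \<subseteq> U} = {e \<in> E2. e \<subseteq> U}"
    and same_L: "{e \<in> E1. e \<subseteq> L} = {e \<in> E2. e \<subseteq> L}"
  shows "E1 = E2"
proof -
  note UL = double_chainD[OF dc]
  have degrees: "card {e \<in> bridges U L E1. v \<in> e} = card {e \<in> bridges U L E2. v \<in> e}" for v
  proof -
    consider "v \<in> U" | "v \<in> L" | "v \<notin> U \<union> L"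
      by blast
    then show ?thesis
    proof cases
      case 1
      then show ?thesis
        using bridges_degree[OF E(1) UL(1)] bridges_degree[OF E(2) UL(1)] same_U by simp
    next
      case 2
      have LU: "L \<inter> U = {}" "polygonization (L \<union> U) E1" "polygonization (L \<union> U) E2"
        using UL(1) E by (simp_all add: Un_commute Int_commute)
      have "card {e \<in> bridges L U E1. v \<in> e} = card {e \<in> bridges L U E2. v \<in> e}"
        using bridges_degree[OF LU(2) LU(1) 2] bridges_degree[OF LU(3) LU(1) 2] by (simp only: same_L)
      then show ?thesis
        by (simp only: bridges_commute[of U L])
    next
      case 3
      then have "{e \<in> bridges U L E'. v \<in> e} = {}" if "polygonization (U \<union> L) E'" for E'
        using polygonization_subset_Pow[OF that] by (auto simp: bridges_def)
      then show ?thesis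
        using E by (simp only:)
    qed
  qed
  have fin: "finite (bridges U L E1)" "finite (bridges U L E2)"
    using finite_polygonization[OF E(1)] finite_polygonization[OF E(2)] by (simp_all add: bridges_def)
  have same_bridges: "bridges U L E1 = bridges U L E2"
    by (rule noncrossing_bridges_eq[OF UL(1,6,7) fin double_chain_noncrossing_bridges[OF dc E(1)]
          double_chain_noncrossing_bridges[OF dc E(2)] degrees])
  have "E1 = {e \<in> E1. e \<subseteq> U} \<union> {e \<in> E1. e \<subseteq> L} \<union> bridges U L E1"
    unfolding bridges_def by (rule edges_partition)
  also have "\<dots> = {e \<in> E2. e \<subseteq> U} \<union> {e \<in> E2. e \<subseteq> L} \<union> bridges U L E2"
    by (simp only: same_U same_L same_bridges)
  also have "\<dots> = E2"
    unfolding bridges_def by (rule edges_partition[symmetric])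
  finally show ?thesis .
qed

lemma inj_on_image_image_eq:
  assumes "inj_on f X" "A \<subseteq> Pow X" "B \<subseteq> Pow X" "(`) f ` A = (`) f ` B"
  shows "A = B"
  using inj_on_image_Pow[OF inj_on_image_Pow[OF assms(1)]] assms(2-4) by (auto dest: inj_onD)

lemma polygonization_nonempty: "polygonization P E \<Longrightarrow> E \<noteq> {}"
  by (metis cycle_edges_conv_path_edges insert_not_empty list.size(3) not_numeral_le_zero polygonizationE)

lemma polygonization_deleted_edge:
  assumes poly: "polygonization P E" and e: "e \<in> E"
  shows "e = {v \<in> P. card {f \<in> E - {e}. v \<in> f} \<noteq> 2}"
proof (rule set_eqI)
  fix v
  have "e \<subseteq> P"
    using polygonization_subset_Pow[OF poly] e by blast
  moreover have "card {f \<in> E - {e}. v \<in> f} = 2 - (if v \<in> e then 1 else 0)" if "v \<in> P"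
    using card_incident_Diff[OF finite_polygonization[OF poly] e, of v]
      polygonization_degree[OF poly that] by simp
  ultimately show "v \<in> e \<longleftrightarrow> v \<in> {v \<in> P. card {f \<in> E - {e}. v \<in> f} \<noteq> 2}"
    by (cases "v \<in> P") auto
qed

lemma polygonization_eq_if_Diff_eq:
  assumes E: "polygonization P E1" "polygonization P E2" and e: "e1 \<in> E1" "e2 \<in> E2"
    and eq: "E1 - {e1} = E2 - {e2}"
  shows "E1 = E2"
proof -
  have "e1 = e2"
    using polygonization_deleted_edge[OF E(1) e(1)] polygonization_deleted_edge[OF E(2) e(2)] eq
    by simp
  have "E1 = insert e1 (E1 - {e1})"
    using e(1) by (rule insert_Diff[symmetric])
  also have "\<dots> = insert e2 (E2 - {e2})"
    unfolding eq using \<open>e1 = e2\<close> by simp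
  also have "\<dots> = E2"
    using e(2) by (rule insert_Diff)
  finally show ?thesis .
qed

lemma card_polygonizations_chain_le:
  assumes "convex_chain X \<or> concave_chain X"
  shows "card {E. polygonization X E} \<le> forest_count (card X)"
proof -
  obtain u where u: "bij_betw u {..<card X} X" "convex_sequence u (card X)"
    using assms by (rule chain_convex_sequence)
  let ?i = "inv_into {..<card X} u"
  define some_edge where "some_edge E = (SOME e. e \<in> E)" for E :: "pt set set"
  define code where "code E = (`) ?i ` (E - {some_edge E})" for E
  have some_edge: "some_edge E \<in> E" if "polygonization X E" for E
    using polygonization_nonempty[OF that] unfolding some_edge_def by (simp add: some_in_eq)
  have inj: "inj_on ?i X"
    using bij_betw_inv_into[OF u(1)] by (simp add: bij_betw_def)
  have "inj_on code {E. polygonization X E}"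
  proof (rule inj_onI)
    fix E1 E2 assume "E1 \<in> {E. polygonization X E}" "E2 \<in> {E. polygonization X E}"
      and eq: "code E1 = code E2"
    then have E: "polygonization X E1" "polygonization X E2"
      by simp_all
    have "E1 - {some_edge E1} = E2 - {some_edge E2}"
      using inj_on_image_image_eq[OF inj _ _ eq[unfolded code_def]] polygonization_subset_Pow[OF E(1)]
        polygonization_subset_Pow[OF E(2)] by blast
    then show "E1 = E2"
      by (rule polygonization_eq_if_Diff_eq[OF E some_edge[OF E(1)] some_edge[OF E(2)]])
  qed
  moreover have "code ` {E. polygonization X E} \<subseteq> noncrossing_forests {..<card X}"
    using polygonization_delete_edge_forest[OF _ some_edge u] by (auto simp: code_def)
  ultimately have "card {E. polygonization X E} \<le> card (noncrossing_forests {..<card X})"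
    by (intro card_inj_on_le) (simp_all add: finite_noncrossing_forests)
  then show ?thesis
    by (simp add: forest_count_def)
qed

lemma card_polygonizations_double_chain_le:
  assumes dc: "double_chain U L"
  shows "card {E. polygonization (U \<union> L) E} \<le> forest_count (card U) * forest_count (card L)"
proof (cases "U = {} \<or> L = {}")
  case True
  then show ?thesis
    using card_polygonizations_chain_le double_chainD(2,3)[OF dc] by (auto simp: forest_count_0)
next
  case False
  then obtain vU vL where v: "vU \<in> U" "vL \<in> L"
    by blast
  note UL = double_chainD[OF dc]
  obtain u where u: "bij_betw u {..<card U} U" "convex_sequence u (card U)"
    using UL(2) by (rule chain_convex_sequence)
  obtain w where w: "bij_betw w {..<card L} L" "convex_sequence w (card L)"
    using UL(3) by (rule chain_convex_sequence)
  let ?iu = "inv_into {..<card U} u" and ?iw = "inv_into {..<card L} w"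
  define code where "code E = ((`) ?iu ` {e \<in> E. e \<subseteq> U}, (`) ?iw ` {e \<in> E. e \<subseteq> L})" for E
  have inj: "inj_on ?iu U" "inj_on ?iw L"
    using bij_betw_inv_into[OF u(1)] bij_betw_inv_into[OF w(1)] by (simp_all add: bij_betw_def)
  have "inj_on code {E. polygonization (U \<union> L) E}"
  proof (rule inj_onI)
    fix E1 E2 assume "E1 \<in> {E. polygonization (U \<union> L) E}" "E2 \<in> {E. polygonization (U \<union> L) E}"
      and eq: "code E1 = code E2"
    then have E: "polygonization (U \<union> L) E1" "polygonization (U \<union> L) E2"
      by simp_all
    show "E1 = E2"
    proof (rule polygonization_eqI[OF dc E])
      show "{e \<in> E1. e \<subseteq> U} = {e \<in> E2. e \<subseteq> U}"
        by (rule inj_on_image_image_eq[OF inj(1)]) (use eq in \<open>auto simp: code_def\<close>)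
      show "{e \<in> E1. e \<subseteq> L} = {e \<in> E2. e \<subseteq> L}"
        by (rule inj_on_image_image_eq[OF inj(2)]) (use eq in \<open>auto simp: code_def\<close>)
    qed
  qed
  moreover have "code E \<in> noncrossing_forests {..<card U} \<times> noncrossing_forests {..<card L}"
    if "polygonization (U \<union> L) E" for E
  proof -
    have "vL \<notin> U" "vU \<notin> L"
      using v UL(1) by blast+
    then show ?thesis
      using polygonization_restrict_forest[OF that _ _ _ u] polygonization_restrict_forest[OF that _ _ _ w] v
      by (simp add: code_def)
  qed
  then have "code ` {E. polygonization (U \<union> L) E} \<subseteq>
      noncrossing_forests {..<card U} \<times> noncrossing_forests {..<card L}"
    by blast
  ultimately have "card {E. polygonization (U \<union> L) E} \<le>
      card (noncrossing_forests {..<card U} \<times> noncrossing_forests {..<card L})"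
    by (intro card_inj_on_le) (simp_all add: finite_noncrossing_forests)
  then show ?thesis
    by (simp add: card_cartesian_product forest_count_def)
qed

theorem corollary4:
  shows "\<exists>C::real. \<forall>U L. double_chain U L \<longrightarrow>
           real (card {E. polygonization (U \<union> L) E}) \<le> C * (5.610718614::real) ^ (card U + card L)"
proof (intro exI[of _ "1.593329\<^sup>2"] allI impI)
  fix U L :: "pt set"
  assume "double_chain U L"
  then have "real (card {E. polygonization (U \<union> L) E}) \<le>
      real (forest_count (card U)) * real (forest_count (card L))"
    using card_polygonizations_double_chain_le by (simp flip: of_nat_mult)
  also have "\<dots> \<le> (1.593329 * 5.610718614 ^ card U) * (1.593329 * 5.610718614 ^ card L)"
    by (intro mult_mono forest_count_le) auto
  also have "\<dots> = 1.593329\<^sup>2 * 5.610718614 ^ (card U + card L)"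
    by (simp only: power_add power2_eq_square mult_ac)
  finally show "real (card {E. polygonization (U \<union> L) E}) \<le>
      1.593329\<^sup>2 * 5.610718614 ^ (card U + card L)" .
qed

end
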